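(* Let $E$ be a directed graph, $R$ a unital ring, $X\subseteq\mathrm{Reg}(E)$, $B=M(G,I)$ a Brandt groupoid, $S=B\cup\{0\}$ the associated Brandt semigroup, and $w$ a weight mapping. Then $C_R^X(E)=\bigoplus_{s\in S}(C_R^X(E))_s$ is an $S$-graded ring inducing $S$ which admits an anti-graded involution. In particular $L_R(E)=C_R^{\mathrm{Reg}(E)}(E)$ is an $S$-graded ring with an anti-graded involution.
   Context: Directed graph $E=(E^0,E^1,\mathrm{r},\mathrm{s})$, paths $E^*$ (including vertices as length-$0$ paths), regular vertices $\mathrm{Reg}(E)$ (vertices $v$ with $\mathrm{s}^{-1}(v)$ nonempty and finite). For unital $R$ and $X\subseteq\mathrm{Reg}(E)$, the Cohn path algebra $C_R^X(E)$ is the $R$-algebra generated by $E^0$, $E^1$, $\{\alpha^*:\alpha\in E^1\}$ (with $R$ commuting with generators) subject to $vv'=\delta_{v,v'}v$; $\mathrm{s}(\alpha)\alpha=\alpha\mathrm{r}(\alpha)=\alpha$, $\mathrm{r}(\alpha)\alpha^*=\alpha^*\mathrm{s}(\alpha)=\alpha^*$; $\alpha^*\alpha'=\delta_{\alpha,\alpha'}\mathrm{r}(\alpha)$; $\sum_{\mathrm{s}(\alpha)=v}\alpha\alpha^*=v$ for $v\in X$; $L_R(E)=C_R^{\mathrm{Reg}(E)}(E)$. For $\mu=\alpha_1\cdots\alpha_k$, $\mu^*=\alpha_k^*\cdots\alpha_1^*$, $v^*=v$. Brandt groupoid: for a group $G$ and a set $I$, $M(G,I)=I\times G\times I$ with partial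 product $(i,g,j)(k,h,l)=(i,gh,l)$ if $j=k$, undefined otherwise. $S=B\cup\{0\}$, undefined products set to $0$, $0$ absorbing; $I(B)$ denotes the idempotents of $B$ (elements $(i,1_G,i)$); $(i,g,j)^{-1}=(j,g^{-1},i)$, $0^{-1}=0$. Weight mapping: a map $w$ with $w(E^0)\subseteq I(B)$, $w(E^1)\subseteq B$, $w(\alpha^* )=w(\alpha)^{-1}$, and $w(\mathrm{s}(\alpha))w(\alpha)=w(\alpha)=w(\alpha)w(\mathrm{r}(\alpha))$ for all $\alpha\in E^1$; extended multiplicatively: $w(\alpha_1\cdots\alpha_k)=w(\alpha_1)\cdots w(\alpha_k)$, $w(\mu\eta^* )=w(\mu)w(\eta)^{-1}$. For $s\in B$, $(C_R^X(E))_s$ is the $R$-linear span of monomials $\mu\eta^*$ ($\mu,\eta\in E^*$, $\mathrm{r}(\mu)=\mathrm{r}(\eta)$) with $w(\mu\eta^* )=s$; $(C_R^X(E))_0=\{0\}$. $S$-graded ring inducing $S$: $R'=\bigoplus_{s\in S}R'_s$ (direct sum of additive subgroups) with $R'_sR'_t\subseteq R'_{st}$ whenever $st$ is defined and $R'_sR'_t\ne0$ only if $st$ is defined (here in $S$ with zero, $R'_0=0$). An anti-graded involution is a map $^*:R'\to R'$ with $(x^* )^*=x$ for all $x$ and $(R'_s)^*=R'_{s^{-1}}$ for all $s\in S$. *)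

theory Defs
  imports "HOL-Algebra.QuotRing" "Graph_Theory.Digraph"
begin

text \<open>Elements of the Brandt groupoid B = M(G,I) are triples (i,g,j).  The Brandt
  semigroup S = B \<union> {0} is modelled by the option type: Some (i,g,j) is an element
  of B and None is the zero 0.\<close>

definition brandt_groupoid :: "('a, 'b) monoid_scheme \<Rightarrow> 'i set \<Rightarrow> ('i \<times> 'a \<times> 'i) set" where
  "brandt_groupoid G I = I \<times> carrier G \<times> I"

definition brandt_semigroup :: "('a, 'b) monoid_scheme \<Rightarrow> 'i set \<Rightarrow> ('i \<times> 'a \<times> 'i) option set" where
  "brandt_semigroup G I = insert None (Some ` brandt_groupoid G I)"

definition brandt_idempotents :: "('a, 'b) monoid_scheme \<Rightarrow> 'i set \<Rightarrow> ('i \<times> 'a \<times> 'i) set" where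
  "brandt_idempotents G I = {(i, \<one>\<^bsub>G\<^esub>, i) | i. i \<in> I}"

fun brandt_mult :: "('a, 'b) monoid_scheme \<Rightarrow> ('i \<times> 'a \<times> 'i) option \<Rightarrow> ('i \<times> 'a \<times> 'i) option \<Rightarrow> ('i \<times> 'a \<times> 'i) option" where
  "brandt_mult G (Some (i, g, j)) (Some (k, h, l)) =
     (if j = k then Some (i, g \<otimes>\<^bsub>G\<^esub> h, l) else None)"
| "brandt_mult G _ _ = None"

fun brandt_inv :: "('a, 'b) monoid_scheme \<Rightarrow> ('i \<times> 'a \<times> 'i) option \<Rightarrow> ('i \<times> 'a \<times> 'i) option" where
  "brandt_inv G (Some (i, g, j)) = Some (j, inv\<^bsub>G\<^esub> g, i)"
| "brandt_inv G None = None"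

text \<open>E = (E^0, E^1, r, s) is a pre_digraph with verts = E^0, arcs = E^1,
  tail = s (source) and head = r (range).\<close>

definition regular_vertices :: "('v, 'e) pre_digraph \<Rightarrow> 'v set" where
  "regular_vertices E = {v \<in> verts E. out_arcs E v \<noteq> {} \<and> finite (out_arcs E v)}"

text \<open>A path is represented as a pair (v, es): a vertex v together with a list of edges
  es = [a1,...,ak] with s(a1) = v and r(ai) = s(a(i+1)).  The pair (v, []) is the vertex v
  viewed as a path of length 0; a path of positive length is determined by its edges.\<close>

fun cohn_edge_chain :: "('v, 'e) pre_digraph \<Rightarrow> 'v \<Rightarrow> 'e list \<Rightarrow> bool" where
  "cohn_edge_chain E v [] = True"
| "cohn_edge_chain E v (e # es) = (e \<in> arcs E \<and> tail E e = v \<and> cohn_edge_chain E (head E e) es)"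

definition cohn_is_path :: "('v, 'e) pre_digraph \<Rightarrow> 'v \<times> 'e list \<Rightarrow> bool" where
  "cohn_is_path E p = (fst p \<in> verts E \<and> cohn_edge_chain E (fst p) (snd p))"

definition cohn_path_range :: "('v, 'e) pre_digraph \<Rightarrow> 'v \<times> 'e list \<Rightarrow> 'v" where
  "cohn_path_range E p = (if snd p = [] then fst p else head E (last (snd p)))"

text \<open>Generators: vertices v, edges \<alpha> and ghost edges \<alpha>*.\<close>
datatype ('v, 'e) cohn_gen = GV 'v | GE 'e | GS 'e

definition cohn_gens :: "('v, 'e) pre_digraph \<Rightarrow> ('v, 'e) cohn_gen set" where
  "cohn_gens E = GV ` verts E \<union> GE ` arcs E \<union> GS ` arcs E"

text \<open>The free unital R-algebra on a set of generators Gs (R a unital, not necessarily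
  commutative ring, commuting with the generators): finitely supported R-valued
  functions on words over Gs, with concatenation-convolution product.\<close>
definition free_algebra :: "'g set \<Rightarrow> ('g list \<Rightarrow> 'r::ring_1) ring" where
  "free_algebra Gs =
     \<lparr>carrier = {f. finite {w. f w \<noteq> 0} \<and> (\<forall>w. f w \<noteq> 0 \<longrightarrow> set w \<subseteq> Gs)},
      mult = (\<lambda>f g w. \<Sum>i\<le>length w. f (take i w) * g (drop i w)),
      one = (\<lambda>w. if w = [] then 1 else 0),
      zero = (\<lambda>w. 0),
      add = (\<lambda>f g w. f w + g w)\<rparr>"

definition word_elem :: "'g list \<Rightarrow> ('g list \<Rightarrow> 'r::ring_1)" where
  "word_elem u = (\<lambda>w. if w = u then 1 else 0)"

definition cohn_relations :: "('v, 'e) pre_digraph \<Rightarrow> 'v set \<Rightarrow> (('v, 'e) cohn_gen list \<Rightarrow> 'r::ring_1) set" where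
  "cohn_relations E X =
     {(\<lambda>w. word_elem [GV v, GV v'] w - (if v = v' then word_elem [GV v] w else 0)) | v v'.
        v \<in> verts E \<and> v' \<in> verts E}
   \<union> {(\<lambda>w. word_elem [GV (tail E a), GE a] w - word_elem [GE a] w) | a. a \<in> arcs E}
   \<union> {(\<lambda>w. word_elem [GE a, GV (head E a)] w - word_elem [GE a] w) | a. a \<in> arcs E}
   \<union> {(\<lambda>w. word_elem [GV (head E a), GS a] w - word_elem [GS a] w) | a. a \<in> arcs E}
   \<union> {(\<lambda>w. word_elem [GS a, GV (tail E a)] w - word_elem [GS a] w) | a. a \<in> arcs E}
   \<union> {(\<lambda>w. word_elem [GS a, GE a'] w - (if a = a' then word_elem [GV (head E a)] w else 0)) | a a'.
        a \<in> arcs E \<and> a' \<in> arcs E}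
   \<union> {(\<lambda>w. (\<Sum>a\<in>out_arcs E v. word_elem [GE a, GS a] w) - word_elem [GV v] w) | v. v \<in> X}"

definition cohn_free :: "('v, 'e) pre_digraph \<Rightarrow> (('v, 'e) cohn_gen list \<Rightarrow> 'r::ring_1) ring" where
  "cohn_free E = free_algebra (cohn_gens E)"

definition cohn_ideal :: "('v, 'e) pre_digraph \<Rightarrow> 'v set \<Rightarrow> (('v, 'e) cohn_gen list \<Rightarrow> 'r::ring_1) set" where
  "cohn_ideal E X = genideal (cohn_free E) (cohn_relations E X)"

definition cohn_class :: "('v, 'e) pre_digraph \<Rightarrow> 'v set \<Rightarrow> (('v, 'e) cohn_gen list \<Rightarrow> 'r::ring_1) \<Rightarrow> (('v, 'e) cohn_gen list \<Rightarrow> 'r) set" where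
  "cohn_class E X f = cohn_ideal E X +>\<^bsub>cohn_free E\<^esub> f"

text \<open>C_R^X(E) is the (non-unital) R-algebra presented by the generators and relations.
  It is realised as the image, in the quotient of the free unital algebra by the ideal
  generated by the relations, of the elements without constant term (the non-unital free
  algebra).\<close>
definition cohn_path_algebra :: "('v, 'e) pre_digraph \<Rightarrow> 'v set \<Rightarrow> (('v, 'e) cohn_gen list \<Rightarrow> 'r::ring_1) set ring" where
  "cohn_path_algebra E X =
     (cohn_free E Quot cohn_ideal E X)
       \<lparr>carrier := cohn_class E X ` {f \<in> carrier (cohn_free E). f [] = 0}\<rparr>"

definition leavitt_path_algebra :: "('v, 'e) pre_digraph \<Rightarrow> (('v, 'e) cohn_gen list \<Rightarrow> 'r::ring_1) set ring" where
  "leavitt_path_algebra E = cohn_path_algebra E (regular_vertices E)"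

text \<open>A weight mapping is given by its values wv on vertices and we on edges;
  w(\<alpha>*) = w(\<alpha>)^{-1} is built into the extension below.\<close>
definition weight_mapping ::
  "('v, 'e) pre_digraph \<Rightarrow> ('a, 'b) monoid_scheme \<Rightarrow> 'i set \<Rightarrow> ('v \<Rightarrow> 'i \<times> 'a \<times> 'i) \<Rightarrow> ('e \<Rightarrow> 'i \<times> 'a \<times> 'i) \<Rightarrow> bool" where
  "weight_mapping E G I wv we \<longleftrightarrow>
     (\<forall>v\<in>verts E. wv v \<in> brandt_idempotents G I) \<and>
     (\<forall>a\<in>arcs E. we a \<in> brandt_groupoid G I) \<and>
     (\<forall>a\<in>arcs E. brandt_mult G (Some (wv (tail E a))) (Some (we a)) = Some (we a)
                \<and> brandt_mult G (Some (we a)) (Some (wv (head E a))) = Some (we a))"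

definition path_weight ::
  "('a, 'b) monoid_scheme \<Rightarrow> ('v \<Rightarrow> 'i \<times> 'a \<times> 'i) \<Rightarrow> ('e \<Rightarrow> 'i \<times> 'a \<times> 'i) \<Rightarrow> 'v \<times> 'e list \<Rightarrow> ('i \<times> 'a \<times> 'i) option" where
  "path_weight G wv we p =
     (if snd p = [] then Some (wv (fst p))
      else foldl (\<lambda>acc a. brandt_mult G acc (Some (we a))) (Some (we (hd (snd p)))) (tl (snd p)))"

definition path_word :: "'v \<times> 'e list \<Rightarrow> ('v, 'e) cohn_gen list" where
  "path_word p = (if snd p = [] then [GV (fst p)] else map GE (snd p))"

definition path_star_word :: "'v \<times> 'e list \<Rightarrow> ('v, 'e) cohn_gen list" where
  "path_star_word p = (if snd p = [] then [GV (fst p)] else map GS (rev (snd p)))"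

definition weighted_monomials ::
  "('v, 'e) pre_digraph \<Rightarrow> ('a, 'b) monoid_scheme \<Rightarrow> ('v \<Rightarrow> 'i \<times> 'a \<times> 'i) \<Rightarrow> ('e \<Rightarrow> 'i \<times> 'a \<times> 'i)
     \<Rightarrow> ('i \<times> 'a \<times> 'i) option \<Rightarrow> ('v, 'e) cohn_gen list set" where
  "weighted_monomials E G wv we s =
     {path_word \<mu> @ path_star_word \<eta> | \<mu> \<eta>.
        cohn_is_path E \<mu> \<and> cohn_is_path E \<eta> \<and> cohn_path_range E \<mu> = cohn_path_range E \<eta> \<and>
        brandt_mult G (path_weight G wv we \<mu>) (brandt_inv G (path_weight G wv we \<eta>)) = s}"

definition cohn_component ::
  "('v, 'e) pre_digraph \<Rightarrow> 'v set \<Rightarrow> ('a, 'b) monoid_scheme \<Rightarrow> ('v \<Rightarrow> 'i \<times> 'a \<times> 'i) \<Rightarrow> ('e \<Rightarrow> 'i \<times> 'a \<times> 'i)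
     \<Rightarrow> ('i \<times> 'a \<times> 'i) option \<Rightarrow> (('v, 'e) cohn_gen list \<Rightarrow> 'r::ring_1) set set" where
  "cohn_component E X G wv we s =
     (if s = None then {\<zero>\<^bsub>cohn_path_algebra E X\<^esub>}
      else cohn_class E X `
        {f \<in> carrier (cohn_free E). \<forall>w. f w \<noteq> 0 \<longrightarrow> w \<in> weighted_monomials E G wv we s})"

definition brandt_graded_ring ::
  "('c, 'd) ring_scheme \<Rightarrow> ('a, 'b) monoid_scheme \<Rightarrow> 'i set \<Rightarrow> (('i \<times> 'a \<times> 'i) option \<Rightarrow> 'c set) \<Rightarrow> bool" where
  "brandt_graded_ring A G I Rs \<longleftrightarrow>
     (\<forall>s\<in>brandt_semigroup G I. subgroup (Rs s) (add_monoid A)) \<and>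
     Rs None = {\<zero>\<^bsub>A\<^esub>} \<and>
     carrier A = {finsum A x T | x T. finite T \<and> T \<subseteq> brandt_semigroup G I \<and> (\<forall>s\<in>T. x s \<in> Rs s)} \<and>
     (\<forall>x T. finite T \<and> T \<subseteq> brandt_semigroup G I \<and> (\<forall>s\<in>T. x s \<in> Rs s) \<and> finsum A x T = \<zero>\<^bsub>A\<^esub>
        \<longrightarrow> (\<forall>s\<in>T. x s = \<zero>\<^bsub>A\<^esub>)) \<and>
     (\<forall>s\<in>brandt_semigroup G I. \<forall>t\<in>brandt_semigroup G I. brandt_mult G s t \<noteq> None \<longrightarrow>
        (\<forall>x\<in>Rs s. \<forall>y\<in>Rs t. x \<otimes>\<^bsub>A\<^esub> y \<in> Rs (brandt_mult G s t))) \<and>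
     (\<forall>s\<in>brandt_semigroup G I. \<forall>t\<in>brandt_semigroup G I. brandt_mult G s t = None \<longrightarrow>
        (\<forall>x\<in>Rs s. \<forall>y\<in>Rs t. x \<otimes>\<^bsub>A\<^esub> y = \<zero>\<^bsub>A\<^esub>))"

definition anti_graded_involution ::
  "('c, 'd) ring_scheme \<Rightarrow> ('a, 'b) monoid_scheme \<Rightarrow> 'i set \<Rightarrow> (('i \<times> 'a \<times> 'i) option \<Rightarrow> 'c set) \<Rightarrow> ('c \<Rightarrow> 'c) \<Rightarrow> bool" where
  "anti_graded_involution A G I Rs star \<longleftrightarrow>
     star \<in> carrier A \<rightarrow> carrier A \<and>
     (\<forall>x\<in>carrier A. star (star x) = x) \<and>
     (\<forall>s\<in>brandt_semigroup G I. star ` Rs s = Rs (brandt_inv G s))"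

end

(*
  Give each generator of the free algebra its weight w, and alpha^* the weight w(alpha)^-1, in
  the Brandt semigroup S with an identity adjoined.  Words then have a multiplicative weight and
  every defining relation is homogeneous, so the ideal of relations is graded: it is closed under
  restricting coefficients to the words of a given weight.

  Modulo the relations, a generator times a monomial mu eta^* is zero or again a monomial, so
  every nonempty word is zero or congruent to a single monomial.  A word congruent to a monomial
  of different weight lies in the ideal, by gradedness; since monomials never have weight 0,
  words of weight 0 vanish.  Hence every homogeneous element of weight s is congruent to a
  combination of monomials of weight s.  This gives the decomposition into the components, the
  independence of the components (restrict a vanishing sum to one weight) and the product rule
  (weights multiply under concatenation).

  Reversing words and exchanging alpha with alpha^* permutes the relations and sends monomials
  of weight s to monomials of weight s^-1, which gives the anti-graded involution.
*)
theory Submission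
  imports Defs
begin

section \<open>The free algebra on a set of generators\<close>

lemma free_algebra_carrier_iff:
  "f \<in> carrier (free_algebra Gs) \<longleftrightarrow> finite {w. f w \<noteq> 0} \<and> (\<forall>w. f w \<noteq> 0 \<longrightarrow> set w \<subseteq> Gs)"
  by (simp add: free_algebra_def)

lemma free_algebra_mult:
  "f \<otimes>\<^bsub>free_algebra Gs\<^esub> g = (\<lambda>w. \<Sum>i\<le>length w. f (take i w) * g (drop i w))"
  by (simp add: free_algebra_def)

lemma free_algebra_add: "f \<oplus>\<^bsub>free_algebra Gs\<^esub> g = (\<lambda>w. f w + g w)"
  by (simp add: free_algebra_def)

lemma free_algebra_zero: "\<zero>\<^bsub>free_algebra Gs\<^esub> = (\<lambda>w. 0)"
  by (simp add: free_algebra_def)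

lemma free_algebra_one: "\<one>\<^bsub>free_algebra Gs\<^esub> = (\<lambda>w. if w = [] then 1 else 0)"
  by (simp add: free_algebra_def)

lemma free_algebra_add_closed:
  assumes "f \<in> carrier (free_algebra Gs)" "g \<in> carrier (free_algebra Gs)"
  shows "(\<lambda>w. f w + g w) \<in> carrier (free_algebra Gs)"
proof -
  have "{w. f w + g w \<noteq> 0} \<subseteq> {w. f w \<noteq> 0} \<union> {w. g w \<noteq> 0}" by auto
  then show ?thesis
    using assms unfolding free_algebra_carrier_iff
    by (metis (mono_tags, lifting) add.right_neutral add_0 finite_Un finite_subset)
qed

lemma free_algebra_uminus_closed:
  "f \<in> carrier (free_algebra Gs) \<Longrightarrow> (\<lambda>w. - f w) \<in> carrier (free_algebra Gs)"
  unfolding free_algebra_carrier_iff by simp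

lemma free_algebra_diff_closed:
  "f \<in> carrier (free_algebra Gs) \<Longrightarrow> g \<in> carrier (free_algebra Gs) \<Longrightarrow>
    (\<lambda>w. f w - g w) \<in> carrier (free_algebra Gs)"
  using free_algebra_add_closed[OF _ free_algebra_uminus_closed] by fastforce

lemma free_algebra_sum_closed:
  "finite T \<Longrightarrow> (\<And>t. t \<in> T \<Longrightarrow> F t \<in> carrier (free_algebra Gs)) \<Longrightarrow>
    (\<lambda>w. \<Sum>t\<in>T. F t w) \<in> carrier (free_algebra Gs)"
proof (induction T rule: finite_induct)
  case empty
  then show ?case by (simp add: free_algebra_carrier_iff)
next
  case (insert a T)
  then show ?case using free_algebra_add_closed[of "F a" Gs "\<lambda>w. \<Sum>t\<in>T. F t w"] by simp
qed

lemma free_algebra_scale_closed: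
  "f \<in> carrier (free_algebra Gs) \<Longrightarrow> (\<lambda>w. r * f w) \<in> carrier (free_algebra Gs)"
  unfolding free_algebra_carrier_iff
  by (metis (mono_tags, lifting) mem_Collect_eq mult_zero_right rev_finite_subset subsetI)

lemma free_algebra_restrict_closed:
  "f \<in> carrier (free_algebra Gs) \<Longrightarrow> (\<lambda>w. if P w then f w else 0) \<in> carrier (free_algebra Gs)"
  unfolding free_algebra_carrier_iff by (auto elim: rev_finite_subset)

lemma free_algebra_mult_nonzero:
  fixes f g :: "'g list \<Rightarrow> 'r::ring_1"
  assumes "(f \<otimes>\<^bsub>free_algebra Gs\<^esub> g) w \<noteq> 0"
  obtains u v where "w = u @ v" "f u \<noteq> 0" "g v \<noteq> 0"
proof -
  obtain i where "f (take i w) * g (drop i w) \<noteq> 0"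
    using assms by (auto simp: free_algebra_mult elim: sum.not_neutral_contains_not_neutral)
  then show ?thesis by (intro that[of "take i w" "drop i w"]) auto
qed

lemma free_algebra_mult_closed:
  fixes f g :: "'g list \<Rightarrow> 'r::ring_1"
  assumes "f \<in> carrier (free_algebra Gs)" "g \<in> carrier (free_algebra Gs)"
  shows "f \<otimes>\<^bsub>free_algebra Gs\<^esub> g \<in> carrier (free_algebra Gs)"
proof -
  let ?h = "f \<otimes>\<^bsub>free_algebra Gs\<^esub> g"
  have supp: "{w. ?h w \<noteq> 0} \<subseteq> (\<lambda>(u, v). u @ v) ` ({w. f w \<noteq> 0} \<times> {w. g w \<noteq> 0})"
    by (auto elim: free_algebra_mult_nonzero)
  have "finite {w. ?h w \<noteq> 0}"
    using assms unfolding free_algebra_carrier_iff by (intro finite_subset[OF supp]) auto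
  moreover have "set w \<subseteq> Gs" if "?h w \<noteq> 0" for w
    using that assms by (elim free_algebra_mult_nonzero) (auto simp: free_algebra_carrier_iff)
  ultimately show ?thesis unfolding free_algebra_carrier_iff by blast
qed

text \<open>Both sides equal the sum of f(x) g(y) h(z) over all splittings w = xyz.\<close>
lemma convolution_assoc:
  fixes f g h :: "'g list \<Rightarrow> 'r::ring_1"
  shows "(\<Sum>i\<le>length w. (\<Sum>j\<le>length (take i w). f (take j (take i w)) * g (drop j (take i w))) * h (drop i w))
       = (\<Sum>j\<le>length w. f (take j w) * (\<Sum>k\<le>length (drop j w). g (take k (drop j w)) * h (drop k (drop j w))))"
proof -
  let ?n = "length w"
  let ?t = "\<lambda>j k. f (take j w) * g (take k (drop j w)) * h (drop (j + k) w)"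
  have "(\<Sum>i\<le>?n. (\<Sum>j\<le>length (take i w). f (take j (take i w)) * g (drop j (take i w))) * h (drop i w))
      = (\<Sum>i\<le>?n. \<Sum>j\<le>i. ?t j (i - j))"
    by (intro sum.cong refl) (simp add: sum_distrib_right min_absorb1 drop_take)
  also have "\<dots> = (\<Sum>(j, k)\<in>{(j, k). j + k \<le> ?n}. ?t j k)"
    by (rule sum.triangle_reindex_eq[symmetric])
  also have "\<dots> = (\<Sum>j\<le>?n. \<Sum>k\<le>?n - j. ?t j k)"
  proof -
    have "{(j, k). j + k \<le> ?n} = Sigma {..?n} (\<lambda>j. {..?n - j})" by auto
    then show ?thesis by (simp add: sum.Sigma)
  qed
  also have "\<dots> = (\<Sum>j\<le>?n. f (take j w) * (\<Sum>k\<le>length (drop j w). g (take k (drop j w)) * h (drop k (drop j w))))"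
    by (intro sum.cong refl) (simp add: sum_distrib_left mult.assoc add.commute)
  finally show ?thesis .
qed

lemma ring_free_algebra: "ring (free_algebra Gs :: ('g list \<Rightarrow> 'r::ring_1) ring)"
proof (rule ringI)
  show "abelian_group (free_algebra Gs :: ('g list \<Rightarrow> 'r) ring)"
  proof (rule abelian_groupI)
    fix x assume "x \<in> carrier (free_algebra Gs :: ('g list \<Rightarrow> 'r) ring)"
    then show "\<exists>y\<in>carrier (free_algebra Gs). y \<oplus>\<^bsub>free_algebra Gs\<^esub> x = \<zero>\<^bsub>free_algebra Gs\<^esub>"
      by (intro bexI[of _ "\<lambda>w. - x w"])
         (auto simp: free_algebra_add free_algebra_zero free_algebra_uminus_closed)
  qed (simp_all add: free_algebra_add free_algebra_zero free_algebra_add_closed ac_simps,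
       simp add: free_algebra_carrier_iff)
  show "monoid (free_algebra Gs :: ('g list \<Rightarrow> 'r) ring)"
  proof (rule monoidI)
    have "{w. (if w = [] then 1 else 0 :: 'r) \<noteq> 0} = {[]}" by auto
    then show "\<one>\<^bsub>free_algebra Gs\<^esub> \<in> carrier (free_algebra Gs :: ('g list \<Rightarrow> 'r) ring)"
      by (simp add: free_algebra_one free_algebra_carrier_iff)
  next
    fix x y z :: "'g list \<Rightarrow> 'r"
    show "x \<otimes>\<^bsub>free_algebra Gs\<^esub> y \<otimes>\<^bsub>free_algebra Gs\<^esub> z = x \<otimes>\<^bsub>free_algebra Gs\<^esub> (y \<otimes>\<^bsub>free_algebra Gs\<^esub> z)"
      unfolding free_algebra_mult by (rule ext) (rule convolution_assoc)
  next
    fix x :: "'g list \<Rightarrow> 'r"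
    have "(\<Sum>i\<le>length w. (if take i w = [] then 1 else 0) * x (drop i w))
        = (\<Sum>i\<le>length w. if i = 0 then x w else 0)" for w
      by (intro sum.cong) auto
    then have "(\<Sum>i\<le>length w. (if take i w = [] then 1 else 0) * x (drop i w)) = x w" for w
      by simp
    then show "\<one>\<^bsub>free_algebra Gs\<^esub> \<otimes>\<^bsub>free_algebra Gs\<^esub> x = x"
      by (simp add: free_algebra_mult free_algebra_one)
    have "(\<Sum>i\<le>length w. x (take i w) * (if drop i w = [] then 1 else 0))
        = (\<Sum>i\<le>length w. if i = length w then x w else 0)" for w
      by (intro sum.cong) auto
    then have "(\<Sum>i\<le>length w. x (take i w) * (if drop i w = [] then 1 else 0)) = x w" for w
      by simp
    then show "x \<otimes>\<^bsub>free_algebra Gs\<^esub> \<one>\<^bsub>free_algebra Gs\<^esub> = x"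
      by (simp add: free_algebra_mult free_algebra_one)
  qed (simp add: free_algebra_mult_closed)
qed (auto simp: free_algebra_mult free_algebra_add sum.distrib ring_distribs)

lemma free_algebra_a_inv:
  assumes "f \<in> carrier (free_algebra Gs :: ('g list \<Rightarrow> 'r::ring_1) ring)"
  shows "\<ominus>\<^bsub>free_algebra Gs\<^esub> f = (\<lambda>w. - f w)"
proof -
  interpret ring "free_algebra Gs :: ('g list \<Rightarrow> 'r) ring" by (rule ring_free_algebra)
  show ?thesis
    by (rule minus_equality)
       (auto simp: assms free_algebra_uminus_closed free_algebra_add free_algebra_zero)
qed

lemma free_algebra_minus:
  "f \<in> carrier (free_algebra Gs :: ('g list \<Rightarrow> 'r::ring_1) ring) \<Longrightarrow> g \<in> carrier (free_algebra Gs) \<Longrightarrow>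
    f \<ominus>\<^bsub>free_algebra Gs\<^esub> g = (\<lambda>w. f w - g w)"
  by (simp add: a_minus_def free_algebra_a_inv free_algebra_add)

lemma free_algebra_finsum_apply:
  assumes "finite T" "F ` T \<subseteq> carrier (free_algebra Gs :: ('g list \<Rightarrow> 'r::ring_1) ring)"
  shows "finsum (free_algebra Gs) F T w = (\<Sum>t\<in>T. F t w)"
  using assms
proof (induction T rule: finite_induct)
  interpret ring "free_algebra Gs :: ('g list \<Rightarrow> 'r) ring" by (rule ring_free_algebra)
  case empty
  then show ?case by (simp add: free_algebra_zero)
next
  interpret ring "free_algebra Gs :: ('g list \<Rightarrow> 'r) ring" by (rule ring_free_algebra)
  case (insert x T)
  then show ?case by (simp add: finsum_insert Pi_def image_subset_iff free_algebra_add)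
qed

definition scaled_word :: "'r::ring_1 \<Rightarrow> 'g list \<Rightarrow> ('g list \<Rightarrow> 'r)" where
  "scaled_word r u = (\<lambda>w. if w = u then r else 0)"

lemma word_elem_eq_scaled_word: "word_elem u = scaled_word 1 u"
  by (simp add: word_elem_def scaled_word_def)

lemma scaled_word_eq_mult: "scaled_word r u w = r * word_elem u w"
  by (simp add: word_elem_def scaled_word_def)

lemma scaled_word_closed: "set u \<subseteq> Gs \<Longrightarrow> scaled_word r u \<in> carrier (free_algebra Gs)"
proof -
  assume "set u \<subseteq> Gs"
  moreover have "{w. scaled_word r u w \<noteq> 0} \<subseteq> {u}" by (auto simp: scaled_word_def)
  ultimately show ?thesis
    unfolding free_algebra_carrier_iff by (auto simp: scaled_word_def dest: finite_subset)
qed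

lemma word_elem_closed: "set u \<subseteq> Gs \<Longrightarrow> word_elem u \<in> carrier (free_algebra Gs)"
  by (simp add: word_elem_eq_scaled_word scaled_word_closed)

lemma scaled_word_mult_apply:
  fixes h :: "'g list \<Rightarrow> 'r::ring_1"
  shows "(scaled_word r u \<otimes>\<^bsub>free_algebra Gs\<^esub> h) w =
    (if take (length u) w = u then r * h (drop (length u) w) else 0)"
proof -
  have "(\<Sum>i\<le>length w. scaled_word r u (take i w) * h (drop i w))
      = (\<Sum>i\<le>length w. if i = length u then
          (if take (length u) w = u then r * h (drop (length u) w) else 0) else 0)"
    by (intro sum.cong) (auto simp: scaled_word_def)
  also have "\<dots> = (if take (length u) w = u then r * h (drop (length u) w) else 0)"
    by (auto simp: sum.delta)
  finally show ?thesis by (simp add: free_algebra_mult)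
qed

lemma mult_scaled_word_apply:
  fixes h :: "'g list \<Rightarrow> 'r::ring_1"
  shows "(h \<otimes>\<^bsub>free_algebra Gs\<^esub> scaled_word r u) w =
    (if length u \<le> length w \<and> drop (length w - length u) w = u
     then h (take (length w - length u) w) * r else 0)"
proof -
  let ?k = "length w - length u"
  have "(\<Sum>i\<le>length w. h (take i w) * scaled_word r u (drop i w))
      = (\<Sum>i\<le>length w. if i = ?k then
          (if length u \<le> length w \<and> drop ?k w = u then h (take ?k w) * r else 0) else 0)"
    by (intro sum.cong) (auto simp: scaled_word_def)
  also have "\<dots> = (if length u \<le> length w \<and> drop ?k w = u then h (take ?k w) * r else 0)"
    by (auto simp: sum.delta)
  finally show ?thesis by (simp add: free_algebra_mult)
qed

lemma word_elem_prefix: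
  "word_elem (p @ u) w = (if take (length p) w = p then word_elem u (drop (length p) w) else 0)"
  by (auto simp: word_elem_def) (metis append_take_drop_id)

lemma word_elem_suffix:
  "word_elem (u @ q) w = (if length q \<le> length w \<and> drop (length w - length q) w = q
     then word_elem u (take (length w - length q) w) else 0)"
  by (auto simp: word_elem_def) (metis append_take_drop_id)

lemma scaled_word_mult_scaled_word:
  "scaled_word r u \<otimes>\<^bsub>free_algebra Gs\<^esub> scaled_word (s::'r::ring_1) v = scaled_word (r * s) (u @ v)"
proof (rule ext)
  fix w
  show "(scaled_word r u \<otimes>\<^bsub>free_algebra Gs\<^esub> scaled_word s v) w = scaled_word (r * s) (u @ v) w"
    unfolding scaled_word_mult_apply by (auto simp: scaled_word_def) (metis append_take_drop_id)
qed

lemma word_elem_mult: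
  "word_elem u \<otimes>\<^bsub>free_algebra Gs\<^esub> (word_elem v :: 'g list \<Rightarrow> 'r::ring_1) = word_elem (u @ v)"
  by (simp add: word_elem_eq_scaled_word scaled_word_mult_scaled_word)

lemma scalar_mult_left:
  "scaled_word r [] \<otimes>\<^bsub>free_algebra Gs\<^esub> (h :: 'g list \<Rightarrow> 'r::ring_1) = (\<lambda>w. r * h w)"
  by (rule ext) (simp add: scaled_word_mult_apply)

lemma scalar_mult_right:
  "(h :: 'g list \<Rightarrow> 'r::ring_1) \<otimes>\<^bsub>free_algebra Gs\<^esub> scaled_word r [] = (\<lambda>w. h w * r)"
  by (rule ext) (simp add: mult_scaled_word_apply)

lemma finite_support_decomp:
  fixes f :: "'g list \<Rightarrow> 'r::ring_1"
  assumes "finite {w. f w \<noteq> 0}"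
  shows "f = (\<lambda>x. \<Sum>w | f w \<noteq> 0. scaled_word (f w) w x)"
proof (rule ext)
  fix x
  have "(\<Sum>w | f w \<noteq> 0. scaled_word (f w) w x) = (\<Sum>w | f w \<noteq> 0. if w = x then f x else 0)"
    by (intro sum.cong) (auto simp: scaled_word_def)
  then show "f x = (\<Sum>w | f w \<noteq> 0. scaled_word (f w) w x)"
    using assms by (simp add: sum.delta')
qed

lemma free_algebra_decomp:
  assumes "f \<in> carrier (free_algebra Gs :: ('g list \<Rightarrow> 'r::ring_1) ring)"
  shows "f = finsum (free_algebra Gs) (\<lambda>u. scaled_word (f u) u) {w. f w \<noteq> 0}"
proof -
  have "finite {w. f w \<noteq> 0}" "(\<lambda>u. scaled_word (f u) u) ` {w. f w \<noteq> 0} \<subseteq> carrier (free_algebra Gs)"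
    using assms by (auto simp: free_algebra_carrier_iff intro!: scaled_word_closed)
  then show ?thesis
    by (subst finite_support_decomp) (auto simp: free_algebra_finsum_apply)
qed

lemma (in abelian_monoid) finsum_closed_subset:
  assumes "finite T" "J \<subseteq> carrier G" "\<zero> \<in> J" "\<And>a b. a \<in> J \<Longrightarrow> b \<in> J \<Longrightarrow> a \<oplus> b \<in> J"
    and "\<And>t. t \<in> T \<Longrightarrow> F t \<in> J"
  shows "finsum G F T \<in> J"
  using assms(1,5)
proof (induction T rule: finite_induct)
  case (insert x T)
  then have "F \<in> T \<rightarrow> carrier G" "F x \<in> carrier G" using assms(2) by auto
  with insert show ?case by (simp add: finsum_insert assms(4))
qed (simp add: assms(3))

text \<open>Every element of the free algebra is a finite sum of scaled words.\<close>
lemma free_algebra_idealI: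
  fixes J :: "('g list \<Rightarrow> 'r::ring_1) set"
  assumes sub: "J \<subseteq> carrier (free_algebra Gs)"
    and zero: "(\<lambda>w. 0) \<in> J"
    and add: "\<And>a b. a \<in> J \<Longrightarrow> b \<in> J \<Longrightarrow> (\<lambda>w. a w + b w) \<in> J"
    and uminus: "\<And>a. a \<in> J \<Longrightarrow> (\<lambda>w. - a w) \<in> J"
    and left: "\<And>a r u. a \<in> J \<Longrightarrow> set u \<subseteq> Gs \<Longrightarrow> scaled_word r u \<otimes>\<^bsub>free_algebra Gs\<^esub> a \<in> J"
    and right: "\<And>a r u. a \<in> J \<Longrightarrow> set u \<subseteq> Gs \<Longrightarrow> a \<otimes>\<^bsub>free_algebra Gs\<^esub> scaled_word r u \<in> J"
  shows "ideal J (free_algebra Gs)"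
proof -
  interpret ring "free_algebra Gs :: ('g list \<Rightarrow> 'r) ring" by (rule ring_free_algebra)
  show ?thesis
  proof (rule idealI[OF ring_free_algebra])
    show "subgroup J (add_monoid (free_algebra Gs))"
    proof (rule add.subgroupI)
      fix a b assume "a \<in> J" "b \<in> J"
      then show "\<ominus>\<^bsub>free_algebra Gs\<^esub> a \<in> J" "a \<oplus>\<^bsub>free_algebra Gs\<^esub> b \<in> J"
        using sub uminus add by (auto simp: free_algebra_a_inv free_algebra_add)
    qed (use sub zero in auto)
  next
    fix a x assume a: "a \<in> J" and x: "x \<in> carrier (free_algebra Gs :: ('g list \<Rightarrow> 'r) ring)"
    let ?S = "{w. x w \<noteq> 0}" and ?x = "\<lambda>u. scaled_word (x u) u"
    have S: "finite ?S" "\<And>u. u \<in> ?S \<Longrightarrow> set u \<subseteq> Gs"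
      using x by (auto simp: free_algebra_carrier_iff)
    have x_Pi: "?x \<in> ?S \<rightarrow> carrier (free_algebra Gs)" using S by (auto intro: scaled_word_closed)
    have a_carr: "a \<in> carrier (free_algebra Gs)" using a sub by auto
    note finsum_J = finsum_closed_subset[OF S(1) sub]
    have "x \<otimes>\<^bsub>free_algebra Gs\<^esub> a = (\<Oplus>\<^bsub>free_algebra Gs\<^esub>u\<in>?S. ?x u \<otimes>\<^bsub>free_algebra Gs\<^esub> a)"
      using free_algebra_decomp[OF x] finsum_ldistr[OF S(1) a_carr x_Pi] by simp
    also have "\<dots> \<in> J"
      using zero add left a S by (intro finsum_J) (auto simp: free_algebra_zero free_algebra_add)
    finally show "x \<otimes>\<^bsub>free_algebra Gs\<^esub> a \<in> J" .
    have "a \<otimes>\<^bsub>free_algebra Gs\<^esub> x = (\<Oplus>\<^bsub>free_algebra Gs\<^esub>u\<in>?S. a \<otimes>\<^bsub>free_algebra Gs\<^esub> ?x u)"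
      using free_algebra_decomp[OF x] finsum_rdistr[OF S(1) a_carr x_Pi] by simp
    also have "\<dots> \<in> J"
      using zero add right a S by (intro finsum_J) (auto simp: free_algebra_zero free_algebra_add)
    finally show "a \<otimes>\<^bsub>free_algebra Gs\<^esub> x \<in> J" .
  qed
qed

section \<open>The Brandt semigroup with an identity adjoined\<close>

text \<open>Weights of words live in S with an identity BOne adjoined (the weight of the empty
  word); BZero is the zero of S.\<close>
datatype 'x brandt_monoid = BOne | BZero | BElem 'x

fun bm_mult ::
  "('a, 'b) monoid_scheme \<Rightarrow> ('i \<times> 'a \<times> 'i) brandt_monoid \<Rightarrow> ('i \<times> 'a \<times> 'i) brandt_monoid
    \<Rightarrow> ('i \<times> 'a \<times> 'i) brandt_monoid" where
  "bm_mult G BOne y = y"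
| "bm_mult G BZero y = BZero"
| "bm_mult G (BElem x) BOne = BElem x"
| "bm_mult G (BElem x) BZero = BZero"
| "bm_mult G (BElem (i, g, j)) (BElem (k, h, l)) = (if j = k then BElem (i, g \<otimes>\<^bsub>G\<^esub> h, l) else BZero)"

fun bm_inv :: "('a, 'b) monoid_scheme \<Rightarrow> ('i \<times> 'a \<times> 'i) brandt_monoid \<Rightarrow> ('i \<times> 'a \<times> 'i) brandt_monoid" where
  "bm_inv G (BElem (i, g, j)) = BElem (j, inv\<^bsub>G\<^esub> g, i)"
| "bm_inv G BOne = BOne"
| "bm_inv G BZero = BZero"

fun bm_in :: "('a, 'b) monoid_scheme \<Rightarrow> 'i set \<Rightarrow> ('i \<times> 'a \<times> 'i) brandt_monoid \<Rightarrow> bool" where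
  "bm_in G I (BElem (i, g, j)) \<longleftrightarrow> i \<in> I \<and> g \<in> carrier G \<and> j \<in> I"
| "bm_in G I _ \<longleftrightarrow> True"

fun of_brandt :: "('i \<times> 'a \<times> 'i) option \<Rightarrow> ('i \<times> 'a \<times> 'i) brandt_monoid" where
  "of_brandt (Some x) = BElem x"
| "of_brandt None = BZero"

fun to_brandt :: "('i \<times> 'a \<times> 'i) brandt_monoid \<Rightarrow> ('i \<times> 'a \<times> 'i) option" where
  "to_brandt (BElem x) = Some x"
| "to_brandt _ = None"

lemma bm_mult_BOne_right [simp]: "bm_mult G x BOne = x"
  by (cases x) auto

lemma bm_mult_BZero_right [simp]: "bm_mult G x BZero = BZero"
  by (cases x) auto

lemma bm_in_mult: "monoid G \<Longrightarrow> bm_in G I x \<Longrightarrow> bm_in G I y \<Longrightarrow> bm_in G I (bm_mult G x y)"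
  by (cases x; cases y) (auto simp: monoid.m_closed)

lemma bm_mult_assoc:
  "monoid G \<Longrightarrow> bm_in G I x \<Longrightarrow> bm_in G I y \<Longrightarrow> bm_in G I z \<Longrightarrow>
    bm_mult G (bm_mult G x y) z = bm_mult G x (bm_mult G y z)"
  by (cases x; cases y; cases z) (auto simp: monoid.m_assoc)

lemma bm_inv_inv: "group G \<Longrightarrow> bm_in G I x \<Longrightarrow> bm_inv G (bm_inv G x) = x"
  by (cases x) auto

lemma bm_inv_mult:
  "group G \<Longrightarrow> bm_in G I x \<Longrightarrow> bm_in G I y \<Longrightarrow>
    bm_inv G (bm_mult G x y) = bm_mult G (bm_inv G y) (bm_inv G x)"
  by (cases x; cases y) (auto simp: group.inv_mult_group)

lemma of_brandt_mult: "of_brandt (brandt_mult G s t) = bm_mult G (of_brandt s) (of_brandt t)"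
  by (cases s; cases t) auto

lemma of_brandt_inv: "of_brandt (brandt_inv G s) = bm_inv G (of_brandt s)"
  by (cases s) auto

lemma of_brandt_eq_iff [simp]: "of_brandt s = of_brandt t \<longleftrightarrow> s = t"
  by (cases s; cases t) auto

lemma of_brandt_neq_BOne [simp]: "of_brandt s \<noteq> BOne" "BOne \<noteq> of_brandt s"
  by (cases s; auto)+

lemma to_brandt_of_brandt [simp]: "to_brandt (of_brandt s) = s"
  by (cases s) auto

lemma of_brandt_to_brandt: "x \<noteq> BOne \<Longrightarrow> of_brandt (to_brandt x) = x"
  by (cases x) auto

lemma brandt_inv_inv:
  "group G \<Longrightarrow> s \<in> brandt_semigroup G I \<Longrightarrow> brandt_inv G (brandt_inv G s) = s"
  by (auto simp: brandt_semigroup_def brandt_groupoid_def)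

lemma to_brandt_in_semigroup: "bm_in G I x \<Longrightarrow> to_brandt x \<in> brandt_semigroup G I"
  by (cases x) (auto simp: brandt_semigroup_def brandt_groupoid_def)


section \<open>Weights of words\<close>

lemma cohn_gens_simps [simp]:
  "GV v \<in> cohn_gens E \<longleftrightarrow> v \<in> verts E"
  "GE a \<in> cohn_gens E \<longleftrightarrow> a \<in> arcs E"
  "GS a \<in> cohn_gens E \<longleftrightarrow> a \<in> arcs E"
  by (auto simp: cohn_gens_def)

lemma cohn_edge_chain_arcs: "cohn_edge_chain E v es \<Longrightarrow> set es \<subseteq> arcs E"
  by (induction es arbitrary: v) auto

locale weighted_cohn =
  fixes E :: "('v, 'e) pre_digraph" and X :: "'v set" and G :: "('a, 'b) monoid_scheme"
    and I :: "'i set" and wv :: "'v \<Rightarrow> 'i \<times> 'a \<times> 'i" and we :: "'e \<Rightarrow> 'i \<times> 'a \<times> 'i"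
    and rty :: "'r::ring_1 itself"
  assumes wf_digraph: "wf_digraph E" and X_verts: "X \<subseteq> verts E" and group: "group G"
    and weight_mapping: "weight_mapping E G I wv we"
begin

abbreviation II where "II \<equiv> (cohn_ideal E X :: (('v, 'e) cohn_gen list \<Rightarrow> 'r) set)"

lemma monoid: "monoid G"
  using group by (rule group.is_monoid)

lemma tail_in_verts: "a \<in> arcs E \<Longrightarrow> tail E a \<in> verts E"
  using wf_digraph by (rule wf_digraph.tail_in_verts)

lemma head_in_verts: "a \<in> arcs E \<Longrightarrow> head E a \<in> verts E"
  using wf_digraph by (rule wf_digraph.head_in_verts)

lemma vertex_weight: "v \<in> verts E \<Longrightarrow> \<exists>i\<in>I. wv v = (i, \<one>\<^bsub>G\<^esub>, i)"
  using weight_mapping by (auto simp: weight_mapping_def brandt_idempotents_def)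

lemma edge_weight:
  assumes a: "a \<in> arcs E"
  obtains i g j where "we a = (i, g, j)" "i \<in> I" "g \<in> carrier G" "j \<in> I"
    "wv (tail E a) = (i, \<one>\<^bsub>G\<^esub>, i)" "wv (head E a) = (j, \<one>\<^bsub>G\<^esub>, j)"
proof -
  obtain i g j where we: "we a = (i, g, j)" "i \<in> I" "g \<in> carrier G" "j \<in> I"
    using weight_mapping a by (auto simp: weight_mapping_def brandt_groupoid_def)
  obtain k where k: "wv (tail E a) = (k, \<one>\<^bsub>G\<^esub>, k)" using vertex_weight[OF tail_in_verts[OF a]] by auto
  obtain l where l: "wv (head E a) = (l, \<one>\<^bsub>G\<^esub>, l)" using vertex_weight[OF head_in_verts[OF a]] by auto
  have "brandt_mult G (Some (wv (tail E a))) (Some (we a)) = Some (we a)"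
    "brandt_mult G (Some (we a)) (Some (wv (head E a))) = Some (we a)"
    using weight_mapping a by (auto simp: weight_mapping_def)
  then have "k = i" "l = j" using k l we by (auto split: if_splits)
  then show ?thesis using that we k l by blast
qed

definition gen_weight :: "('v, 'e) cohn_gen \<Rightarrow> ('i \<times> 'a \<times> 'i) brandt_monoid" where
  "gen_weight x = (if x \<in> cohn_gens E then
     (case x of GV v \<Rightarrow> BElem (wv v) | GE a \<Rightarrow> BElem (we a) | GS a \<Rightarrow> bm_inv G (BElem (we a)))
   else BZero)"

definition word_weight :: "('v, 'e) cohn_gen list \<Rightarrow> ('i \<times> 'a \<times> 'i) brandt_monoid" where
  "word_weight w = foldr (\<lambda>x acc. bm_mult G (gen_weight x) acc) w BOne"

lemma gen_weight_simps:
  "v \<in> verts E \<Longrightarrow> gen_weight (GV v) = BElem (wv v)"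
  "a \<in> arcs E \<Longrightarrow> gen_weight (GE a) = BElem (we a)"
  "a \<in> arcs E \<Longrightarrow> gen_weight (GS a) = bm_inv G (BElem (we a))"
  by (simp_all add: gen_weight_def)

lemma bm_in_gen_weight: "bm_in G I (gen_weight x)"
proof (cases "x \<in> cohn_gens E")
  case True
  then show ?thesis
  proof (cases x)
    case (GV v)
    then show ?thesis using True vertex_weight[of v] monoid by (auto simp: gen_weight_simps)
  next
    case (GE a)
    then show ?thesis using True by (auto simp: gen_weight_simps elim: edge_weight)
  next
    case (GS a)
    then show ?thesis using True group by (auto simp: gen_weight_simps elim: edge_weight)
  qed
qed (simp add: gen_weight_def)

lemma word_weight_Nil [simp]: "word_weight [] = BOne"
  by (simp add: word_weight_def)

lemma word_weight_Cons: "word_weight (x # w) = bm_mult G (gen_weight x) (word_weight w)"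
  by (simp add: word_weight_def)

lemma word_weight_single: "word_weight [x] = gen_weight x"
  by (simp add: word_weight_Cons)

lemma bm_in_word_weight: "bm_in G I (word_weight w)"
  by (induction w) (auto simp: word_weight_Cons bm_in_gen_weight intro: bm_in_mult[OF monoid])

lemma word_weight_append: "word_weight (u @ v) = bm_mult G (word_weight u) (word_weight v)"
  by (induction u)
     (simp_all add: word_weight_Cons bm_mult_assoc[OF monoid bm_in_gen_weight bm_in_word_weight bm_in_word_weight])

lemma word_weight_neq_BOne:
  "w \<noteq> [] \<Longrightarrow> set w \<subseteq> cohn_gens E \<Longrightarrow> word_weight w \<noteq> BOne"
proof (induction w)
  case (Cons x w)
  have "gen_weight x \<noteq> BOne"
    using Cons.prems by (cases x) (auto simp: gen_weight_simps elim: edge_weight)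
  moreover have "w \<noteq> [] \<Longrightarrow> word_weight w \<noteq> BOne" using Cons by auto
  ultimately show ?case
    by (cases w; cases "gen_weight x"; cases "word_weight w")
       (auto simp: word_weight_Cons split: prod.splits if_splits)
qed simp

lemma relation_word_weights:
  assumes a: "a \<in> arcs E"
  shows "word_weight [GV (tail E a), GE a] = word_weight [GE a]"
    "word_weight [GE a, GV (head E a)] = word_weight [GE a]"
    "word_weight [GV (head E a), GS a] = word_weight [GS a]"
    "word_weight [GS a, GV (tail E a)] = word_weight [GS a]"
    "word_weight [GS a, GE a] = word_weight [GV (head E a)]"
    "word_weight [GE a, GS a] = word_weight [GV (tail E a)]"
proof -
  obtain i g j where w: "we a = (i, g, j)" "i \<in> I" "g \<in> carrier G" "j \<in> I"
    "wv (tail E a) = (i, \<one>\<^bsub>G\<^esub>, i)" "wv (head E a) = (j, \<one>\<^bsub>G\<^esub>, j)"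
    using a by (rule edge_weight)
  note simps = word_weight_Cons gen_weight_simps a tail_in_verts[OF a] head_in_verts[OF a] w
  show "word_weight [GV (tail E a), GE a] = word_weight [GE a]"
    "word_weight [GE a, GV (head E a)] = word_weight [GE a]"
    "word_weight [GV (head E a), GS a] = word_weight [GS a]"
    "word_weight [GS a, GV (tail E a)] = word_weight [GS a]"
    using monoid group w by (simp_all add: simps)
  show "word_weight [GS a, GE a] = word_weight [GV (head E a)]"
    "word_weight [GE a, GS a] = word_weight [GV (tail E a)]"
    using group w by (simp_all add: simps group.l_inv group.r_inv)
qed

lemma vertex_vertex_weight: "v \<in> verts E \<Longrightarrow> word_weight [GV v, GV v] = word_weight [GV v]"
  using vertex_weight[of v] monoid by (auto simp: word_weight_Cons gen_weight_simps)

text \<open>A relation is a difference of two words of equal weight, a single word, or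
  (for the vertices of X) a sum of words of the weight of a vertex.\<close>
lemma relation_homogeneous:
  assumes "r \<in> cohn_relations E X"
  shows "\<exists>t. \<forall>w. (r :: ('v, 'e) cohn_gen list \<Rightarrow> 'r) w \<noteq> 0 \<longrightarrow> word_weight w = t"
  using assms unfolding cohn_relations_def
proof (elim UnE CollectE exE conjE)
  fix v v' assume "r = (\<lambda>w. word_elem [GV v, GV v'] w - (if v = v' then word_elem [GV v] w else 0))"
    and "v \<in> verts E"
  then show ?thesis using vertex_vertex_weight
    by (intro exI[of _ "word_weight [GV v, GV v']"]) (auto simp: word_elem_def split: if_splits)
next
  fix v assume r: "r = (\<lambda>w. (\<Sum>a\<in>out_arcs E v. word_elem [GE a, GS a] w) - word_elem [GV v] w)"
  show ?thesis
  proof (intro exI[of _ "word_weight [GV v]"] allI impI)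
    fix w assume "r w \<noteq> 0"
    then have "(\<Sum>a\<in>out_arcs E v. word_elem [GE a, GS a] w :: 'r) \<noteq> 0 \<or> w = [GV v]"
      using r by (auto simp: word_elem_def split: if_splits)
    then show "word_weight w = word_weight [GV v]"
    proof
      assume "(\<Sum>a\<in>out_arcs E v. word_elem [GE a, GS a] w :: 'r) \<noteq> 0"
      then obtain a where "a \<in> out_arcs E v" "(word_elem [GE a, GS a] w :: 'r) \<noteq> 0"
        by (rule sum.not_neutral_contains_not_neutral)
      then show ?thesis using relation_word_weights(6)[of a] by (auto simp: word_elem_def split: if_splits)
    qed simp
  qed
next
  fix a a' assume "r = (\<lambda>w. word_elem [GS a, GE a'] w - (if a = a' then word_elem [GV (head E a)] w else 0))"
    and "a \<in> arcs E"
  then show ?thesis using relation_word_weights(5)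
    by (intro exI[of _ "word_weight [GS a, GE a']"]) (auto simp: word_elem_def split: if_splits)
qed (use relation_word_weights in \<open>fastforce simp: word_elem_def split: if_splits\<close>)+

lemma cohn_free_eq: "cohn_free E = free_algebra (cohn_gens E)"
  by (simp add: cohn_free_def)

lemma ring_cohn_free: "ring (cohn_free E :: (('v, 'e) cohn_gen list \<Rightarrow> 'r) ring)"
  by (simp add: cohn_free_eq ring_free_algebra)

lemma cohn_free_mult_closed:
  "f \<in> carrier (cohn_free E) \<Longrightarrow> g \<in> carrier (cohn_free E) \<Longrightarrow>
    f \<otimes>\<^bsub>cohn_free E\<^esub> (g :: ('v, 'e) cohn_gen list \<Rightarrow> 'r) \<in> carrier (cohn_free E)"
  by (simp add: ring.ring_simprules(5)[OF ring_cohn_free])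

lemma cohn_free_scaled_word_closed:
  "set u \<subseteq> cohn_gens E \<Longrightarrow> scaled_word r u \<in> carrier (cohn_free E)"
  by (simp add: cohn_free_eq scaled_word_closed)

lemma cohn_relations_closed: "cohn_relations E X \<subseteq> carrier (cohn_free E :: (('v, 'e) cohn_gen list \<Rightarrow> 'r) ring)"
proof -
  have word: "word_elem u \<in> carrier (cohn_free E :: (('v, 'e) cohn_gen list \<Rightarrow> 'r) ring)"
    if "set u \<subseteq> cohn_gens E" for u
    using that by (simp add: cohn_free_eq word_elem_closed)
  have "(\<lambda>w. \<Sum>a\<in>out_arcs E v. word_elem [GE a, GS a] w) \<in> carrier (cohn_free E :: (_ \<Rightarrow> 'r) ring)"
    for v
  proof (cases "finite (out_arcs E v)")
    case True
    then show ?thesis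
      unfolding cohn_free_eq by (intro free_algebra_sum_closed) (auto intro!: word_elem_closed)
  qed (simp add: cohn_free_eq free_algebra_carrier_iff)
  moreover have "(\<lambda>w. if P then (word_elem u w :: 'r) else 0) \<in> carrier (cohn_free E)"
    if "set u \<subseteq> cohn_gens E" for P u
    using word[OF that] by (cases P) (auto simp: cohn_free_eq free_algebra_carrier_iff)
  moreover have "(\<lambda>w. f w - g w) \<in> carrier (cohn_free E)"
    if "f \<in> carrier (cohn_free E)" "g \<in> carrier (cohn_free E)" for f g :: "_ \<Rightarrow> 'r"
    using that by (simp add: cohn_free_eq free_algebra_diff_closed)
  ultimately show ?thesis
    using X_verts tail_in_verts head_in_verts word unfolding cohn_relations_def by auto
qed

lemma ideal_cohn_ideal: "ideal II (cohn_free E)"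
  unfolding cohn_ideal_def by (rule ring.genideal_ideal[OF ring_cohn_free cohn_relations_closed])

lemma cohn_relation_in_ideal: "r \<in> cohn_relations E X \<Longrightarrow> r \<in> II"
  unfolding cohn_ideal_def using ring.genideal_self[OF ring_cohn_free cohn_relations_closed] by auto

lemma cohn_ideal_closed: "h \<in> II \<Longrightarrow> h \<in> carrier (cohn_free E)"
  using ideal.Icarr[OF ideal_cohn_ideal] by blast

lemma cohn_ideal_zero: "(\<lambda>w. 0) \<in> II"
  using additive_subgroup.zero_closed[OF ideal.axioms(1)[OF ideal_cohn_ideal]]
  by (simp add: cohn_free_eq free_algebra_zero)

lemma cohn_ideal_add: "a \<in> II \<Longrightarrow> b \<in> II \<Longrightarrow> (\<lambda>w. a w + b w) \<in> II"
  using additive_subgroup.a_closed[OF ideal.axioms(1)[OF ideal_cohn_ideal]]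
  by (fastforce simp: cohn_free_eq free_algebra_add)

lemma cohn_ideal_uminus: "a \<in> II \<Longrightarrow> (\<lambda>w. - a w) \<in> II"
  using additive_subgroup.a_inv_closed[OF ideal.axioms(1)[OF ideal_cohn_ideal]] cohn_ideal_closed[of a]
  by (fastforce simp: cohn_free_eq free_algebra_a_inv)

lemma cohn_ideal_mult_left: "a \<in> II \<Longrightarrow> x \<in> carrier (cohn_free E) \<Longrightarrow> x \<otimes>\<^bsub>cohn_free E\<^esub> a \<in> II"
  using ideal.I_l_closed[OF ideal_cohn_ideal] by blast

lemma cohn_ideal_mult_right: "a \<in> II \<Longrightarrow> x \<in> carrier (cohn_free E) \<Longrightarrow> a \<otimes>\<^bsub>cohn_free E\<^esub> x \<in> II"
  using ideal.I_r_closed[OF ideal_cohn_ideal] by blast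

lemma cohn_ideal_scale_left: "a \<in> II \<Longrightarrow> (\<lambda>w. r * a w) \<in> II"
  using cohn_ideal_mult_left[of a "scaled_word r []"] cohn_free_scaled_word_closed[of "[]" r]
  by (simp add: cohn_free_eq scalar_mult_left)

lemma cohn_ideal_scale_right: "a \<in> II \<Longrightarrow> (\<lambda>w. a w * r) \<in> II"
  using cohn_ideal_mult_right[of a "scaled_word r []"] cohn_free_scaled_word_closed[of "[]" r]
  by (simp add: cohn_free_eq scalar_mult_right)

lemma cohn_ideal_sum: "finite T \<Longrightarrow> (\<And>t. t \<in> T \<Longrightarrow> F t \<in> II) \<Longrightarrow> (\<lambda>w. \<Sum>t\<in>T. F t w) \<in> II"
proof (induction T rule: finite_induct)
  case (insert a T)
  then show ?case using cohn_ideal_add[of "F a" "\<lambda>w. \<Sum>t\<in>T. F t w"] by simp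
qed (simp add: cohn_ideal_zero)

lemma cohn_ideal_subsetI:
  assumes "J \<subseteq> carrier (cohn_free E)" "(\<lambda>w. 0) \<in> J"
    and "\<And>a b. a \<in> J \<Longrightarrow> b \<in> J \<Longrightarrow> (\<lambda>w. a w + b w) \<in> J"
    and "\<And>a. a \<in> J \<Longrightarrow> (\<lambda>w. - a w) \<in> J"
    and "\<And>a r u. a \<in> J \<Longrightarrow> set u \<subseteq> cohn_gens E \<Longrightarrow> scaled_word r u \<otimes>\<^bsub>cohn_free E\<^esub> a \<in> J"
    and "\<And>a r u. a \<in> J \<Longrightarrow> set u \<subseteq> cohn_gens E \<Longrightarrow> a \<otimes>\<^bsub>cohn_free E\<^esub> scaled_word r u \<in> J"
    and "cohn_relations E X \<subseteq> J"
  shows "II \<subseteq> J"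
proof -
  have "ideal J (cohn_free E)"
    using assms(1-6) unfolding cohn_free_eq by (rule free_algebra_idealI)
  then show ?thesis
    unfolding cohn_ideal_def by (rule ring.genideal_minimal[OF ring_cohn_free _ assms(7)])
qed

definition restrict_weight ::
  "('i \<times> 'a \<times> 'i) brandt_monoid set \<Rightarrow> (('v, 'e) cohn_gen list \<Rightarrow> 'r) \<Rightarrow> (('v, 'e) cohn_gen list \<Rightarrow> 'r)" where
  "restrict_weight W h = (\<lambda>w. if word_weight w \<in> W then h w else 0)"

lemma restrict_weight_closed:
  "h \<in> carrier (cohn_free E) \<Longrightarrow> restrict_weight W h \<in> carrier (cohn_free E)"
  unfolding restrict_weight_def cohn_free_eq by (rule free_algebra_restrict_closed)

lemma restrict_weight_homogeneous:
  "\<forall>w. h w \<noteq> 0 \<longrightarrow> word_weight w = t \<Longrightarrow> restrict_weight W h = (if t \<in> W then h else (\<lambda>w. 0))"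
  by (auto simp: restrict_weight_def fun_eq_iff)

lemma restrict_weight_scaled_word_mult:
  "restrict_weight W (scaled_word r u \<otimes>\<^bsub>cohn_free E\<^esub> a)
    = scaled_word r u \<otimes>\<^bsub>cohn_free E\<^esub> restrict_weight {s. bm_mult G (word_weight u) s \<in> W} a"
proof (rule ext)
  fix w
  have "word_weight w = bm_mult G (word_weight u) (word_weight (drop (length u) w))"
    if "take (length u) w = u"
    using that word_weight_append[of u "drop (length u) w"] by (metis append_take_drop_id)
  then show "restrict_weight W (scaled_word r u \<otimes>\<^bsub>cohn_free E\<^esub> a) w
      = (scaled_word r u \<otimes>\<^bsub>cohn_free E\<^esub> restrict_weight {s. bm_mult G (word_weight u) s \<in> W} a) w"
    by (simp add: restrict_weight_def cohn_free_eq scaled_word_mult_apply)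
qed

lemma restrict_weight_mult_scaled_word:
  "restrict_weight W (a \<otimes>\<^bsub>cohn_free E\<^esub> scaled_word r u)
    = restrict_weight {s. bm_mult G s (word_weight u) \<in> W} a \<otimes>\<^bsub>cohn_free E\<^esub> scaled_word r u"
proof (rule ext)
  fix w :: "('v, 'e) cohn_gen list"
  let ?k = "length w - length u"
  have "word_weight w = bm_mult G (word_weight (take ?k w)) (word_weight u)"
    if "drop ?k w = u"
    using that word_weight_append[of "take ?k w" u] by (metis append_take_drop_id)
  then show "restrict_weight W (a \<otimes>\<^bsub>cohn_free E\<^esub> scaled_word r u) w
      = (restrict_weight {s. bm_mult G s (word_weight u) \<in> W} a \<otimes>\<^bsub>cohn_free E\<^esub> scaled_word r u) w"
    by (auto simp: restrict_weight_def cohn_free_eq mult_scaled_word_apply)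
qed

lemma restrict_weight_in_cohn_ideal:
  assumes "h \<in> II"
  shows "restrict_weight W h \<in> II"
proof -
  define J where "J = {h \<in> carrier (cohn_free E). \<forall>W. restrict_weight W h \<in> II}"
  have "II \<subseteq> J"
  proof (rule cohn_ideal_subsetI)
    show "(\<lambda>w. 0) \<in> J"
      using cohn_ideal_zero by (simp add: J_def restrict_weight_def cohn_free_eq free_algebra_carrier_iff)
  next
    fix a b assume "a \<in> J" "b \<in> J"
    then show "(\<lambda>w. a w + b w) \<in> J"
      using cohn_ideal_add[of "restrict_weight W a" "restrict_weight W b" for W]
      by (auto simp: J_def cohn_free_eq free_algebra_add_closed restrict_weight_def if_distrib cong: if_cong)
  next
    fix a assume "a \<in> J"
    then show "(\<lambda>w. - a w) \<in> J"
      using cohn_ideal_uminus[of "restrict_weight W a" for W]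
      by (auto simp: J_def cohn_free_eq free_algebra_uminus_closed restrict_weight_def if_distrib cong: if_cong)
  next
    fix a r u assume "a \<in> J" "set u \<subseteq> cohn_gens E"
    then show "scaled_word r u \<otimes>\<^bsub>cohn_free E\<^esub> a \<in> J"
      by (auto simp: J_def restrict_weight_scaled_word_mult
          intro!: cohn_ideal_mult_left cohn_free_scaled_word_closed cohn_free_mult_closed)
  next
    fix a r u assume "a \<in> J" "set u \<subseteq> cohn_gens E"
    then show "a \<otimes>\<^bsub>cohn_free E\<^esub> scaled_word r u \<in> J"
      by (auto simp: J_def restrict_weight_mult_scaled_word
          intro!: cohn_ideal_mult_right cohn_free_scaled_word_closed cohn_free_mult_closed)
  next
    show "cohn_relations E X \<subseteq> J"
    proof
      fix r :: "('v, 'e) cohn_gen list \<Rightarrow> 'r" assume r: "r \<in> cohn_relations E X"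
      then obtain t where "\<forall>w. r w \<noteq> 0 \<longrightarrow> word_weight w = t"
        using relation_homogeneous[OF r] by blast
      then have "restrict_weight W r = (if t \<in> W then r else (\<lambda>w. 0))" for W
        by (rule restrict_weight_homogeneous)
      then show "r \<in> J"
        using r cohn_relations_closed cohn_relation_in_ideal cohn_ideal_zero by (auto simp: J_def)
    qed
  qed (auto simp: J_def)
  then show ?thesis using assms by (auto simp: J_def)
qed

end

section \<open>Reduction of words to monomials\<close>

definition word_cong :: "('g list \<Rightarrow> 'r::ring_1) set \<Rightarrow> 'g list \<Rightarrow> 'g list \<Rightarrow> bool" where
  "word_cong J u u' \<longleftrightarrow> (\<lambda>w. word_elem u w - word_elem u' w) \<in> J"

definition monomial_pair :: "('v, 'e) pre_digraph \<Rightarrow> 'v \<times> 'e list \<Rightarrow> 'v \<times> 'e list \<Rightarrow> bool" where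
  "monomial_pair E \<mu> \<eta> \<longleftrightarrow>
     cohn_is_path E \<mu> \<and> cohn_is_path E \<eta> \<and> cohn_path_range E \<mu> = cohn_path_range E \<eta>"

definition monomial_word :: "'v \<times> 'e list \<Rightarrow> 'v \<times> 'e list \<Rightarrow> ('v, 'e) cohn_gen list" where
  "monomial_word \<mu> \<eta> = path_word \<mu> @ path_star_word \<eta>"

definition reduces_to_monomial ::
  "('v, 'e) pre_digraph \<Rightarrow> (('v, 'e) cohn_gen list \<Rightarrow> 'r::ring_1) set \<Rightarrow> ('v, 'e) cohn_gen list \<Rightarrow> bool" where
  "reduces_to_monomial E J w \<longleftrightarrow>
     word_elem w \<in> J \<or> (\<exists>\<mu> \<eta>. monomial_pair E \<mu> \<eta> \<and> word_cong J w (monomial_word \<mu> \<eta>))"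

lemma weighted_monomials_eq:
  "weighted_monomials E G wv we s =
     {monomial_word \<mu> \<eta> | \<mu> \<eta>. monomial_pair E \<mu> \<eta> \<and>
        brandt_mult G (path_weight G wv we \<mu>) (brandt_inv G (path_weight G wv we \<eta>)) = s}"
  by (simp add: weighted_monomials_def monomial_pair_def monomial_word_def)

lemma cohn_is_path_Nil: "cohn_is_path E (v, []) \<longleftrightarrow> v \<in> verts E"
  by (simp add: cohn_is_path_def)

lemma cohn_is_path_Cons:
  "cohn_is_path E (u, a # es) \<longleftrightarrow> u \<in> verts E \<and> a \<in> arcs E \<and> tail E a = u \<and> cohn_edge_chain E (head E a) es"
  by (auto simp: cohn_is_path_def)

lemma cohn_path_range_Cons: "cohn_path_range E (u, a # es) = cohn_path_range E (head E a, es)"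
  by (simp add: cohn_path_range_def)

lemma cohn_edge_chain_snoc:
  "cohn_edge_chain E v fs \<Longrightarrow> b \<in> arcs E \<Longrightarrow> tail E b = cohn_path_range E (v, fs) \<Longrightarrow>
    cohn_edge_chain E v (fs @ [b])"
  by (induction fs arbitrary: v) (auto simp: cohn_path_range_def split: if_splits)

lemma monomial_word_Cons: "monomial_word (u, a # es) \<eta> = GE a # map GE es @ path_star_word \<eta>"
  by (simp add: monomial_word_def path_word_def)

lemma monomial_word_Nil: "monomial_word (u, []) \<eta> = GV u # path_star_word \<eta>"
  by (simp add: monomial_word_def path_word_def)

lemma monomial_word_ne: "monomial_word \<mu> \<eta> \<noteq> []"
  by (simp add: monomial_word_def path_word_def)

lemma path_word_gens: "cohn_is_path E \<mu> \<Longrightarrow> set (path_word \<mu>) \<subseteq> cohn_gens E"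
  by (cases \<mu>) (auto simp: path_word_def cohn_is_path_def cohn_gens_def dest!: cohn_edge_chain_arcs)

lemma path_star_word_gens: "cohn_is_path E \<mu> \<Longrightarrow> set (path_star_word \<mu>) \<subseteq> cohn_gens E"
  by (cases \<mu>) (auto simp: path_star_word_def cohn_is_path_def cohn_gens_def dest!: cohn_edge_chain_arcs)

lemma monomial_word_gens: "monomial_pair E \<mu> \<eta> \<Longrightarrow> set (monomial_word \<mu> \<eta>) \<subseteq> cohn_gens E"
  by (simp add: monomial_pair_def monomial_word_def path_word_gens path_star_word_gens)

context weighted_cohn
begin

lemma word_cong_refl: "word_cong II u u"
  using cohn_ideal_zero by (simp add: word_cong_def)

lemma word_cong_sym: "word_cong II u u' \<Longrightarrow> word_cong II u' u"
  unfolding word_cong_def using cohn_ideal_uminus by fastforce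

lemma word_cong_trans: "word_cong II u u' \<Longrightarrow> word_cong II u' u'' \<Longrightarrow> word_cong II u u''"
  unfolding word_cong_def using cohn_ideal_add by fastforce

lemma word_cong_in_ideal: "word_cong II u u' \<Longrightarrow> word_elem u' \<in> II \<Longrightarrow> word_elem u \<in> II"
  unfolding word_cong_def using cohn_ideal_add by fastforce

lemma word_cong_append_left:
  assumes "set p \<subseteq> cohn_gens E" "word_cong II u u'"
  shows "word_cong II (p @ u) (p @ u')"
proof -
  let ?d = "(\<lambda>w. word_elem u w - word_elem u' w) :: _ \<Rightarrow> 'r"
  have "scaled_word 1 p \<otimes>\<^bsub>cohn_free E\<^esub> ?d \<in> II"
    using assms by (intro cohn_ideal_mult_left cohn_free_scaled_word_closed) (auto simp: word_cong_def)
  moreover have "scaled_word 1 p \<otimes>\<^bsub>cohn_free E\<^esub> ?d = (\<lambda>w. word_elem (p @ u) w - word_elem (p @ u') w)"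
    by (rule ext) (auto simp: cohn_free_eq scaled_word_mult_apply word_elem_prefix)
  ultimately show ?thesis by (simp add: word_cong_def)
qed

lemma word_cong_append_right:
  assumes "set q \<subseteq> cohn_gens E" "word_cong II u u'"
  shows "word_cong II (u @ q) (u' @ q)"
proof -
  let ?d = "(\<lambda>w. word_elem u w - word_elem u' w) :: _ \<Rightarrow> 'r"
  have "?d \<otimes>\<^bsub>cohn_free E\<^esub> scaled_word 1 q \<in> II"
    using assms by (intro cohn_ideal_mult_right cohn_free_scaled_word_closed) (auto simp: word_cong_def)
  moreover have "?d \<otimes>\<^bsub>cohn_free E\<^esub> scaled_word 1 q = (\<lambda>w. word_elem (u @ q) w - word_elem (u' @ q) w)"
    by (rule ext) (auto simp: cohn_free_eq mult_scaled_word_apply word_elem_suffix)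
  ultimately show ?thesis by (simp add: word_cong_def)
qed

lemma word_in_ideal_append_left:
  "set p \<subseteq> cohn_gens E \<Longrightarrow> word_elem u \<in> II \<Longrightarrow> word_elem (p @ u) \<in> II"
  using cohn_ideal_mult_left[of "word_elem u" "word_elem p"]
  by (simp add: cohn_free_eq word_elem_closed word_elem_mult)

lemma word_in_ideal_append_right:
  "set q \<subseteq> cohn_gens E \<Longrightarrow> word_elem u \<in> II \<Longrightarrow> word_elem (u @ q) \<in> II"
  using cohn_ideal_mult_right[of "word_elem u" "word_elem q"]
  by (simp add: cohn_free_eq word_elem_closed word_elem_mult)

lemma reduces_to_monomial_cong:
  "word_cong II w w' \<Longrightarrow> reduces_to_monomial E II w' \<Longrightarrow> reduces_to_monomial E II w"
  unfolding reduces_to_monomial_def using word_cong_in_ideal word_cong_trans by blast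

lemma reduces_to_monomialI:
  "monomial_pair E \<mu> \<eta> \<Longrightarrow> word_cong II w (monomial_word \<mu> \<eta>) \<Longrightarrow> reduces_to_monomial E II w"
  unfolding reduces_to_monomial_def by blast

lemma reduces_to_monomial_in_ideal: "word_elem w \<in> II \<Longrightarrow> reduces_to_monomial E II w"
  unfolding reduces_to_monomial_def by blast

lemma vertex_vertex_cong: "v \<in> verts E \<Longrightarrow> word_cong II [GV v, GV v] [GV v]"
proof -
  assume "v \<in> verts E"
  then have "(\<lambda>w. word_elem [GV v, GV v] w - (if v = v then word_elem [GV v] w else 0) :: 'r)
      \<in> cohn_relations E X"
    unfolding cohn_relations_def by blast
  then show ?thesis using cohn_relation_in_ideal by (simp add: word_cong_def)
qed

lemma vertex_vertex_in_ideal: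
  "v \<in> verts E \<Longrightarrow> v' \<in> verts E \<Longrightarrow> v \<noteq> v' \<Longrightarrow> word_elem [GV v, GV v'] \<in> II"
proof -
  assume "v \<in> verts E" "v' \<in> verts E" "v \<noteq> v'"
  moreover have "(\<lambda>w. word_elem [GV v, GV v'] w - (if v = v' then word_elem [GV v] w else 0) :: 'r)
      \<in> cohn_relations E X" if "v \<in> verts E" "v' \<in> verts E"
    unfolding cohn_relations_def using that by blast
  ultimately show ?thesis using cohn_relation_in_ideal by simp
qed

lemma tail_edge_cong: "a \<in> arcs E \<Longrightarrow> word_cong II [GV (tail E a), GE a] [GE a]"
proof -
  assume "a \<in> arcs E"
  then have "(\<lambda>w. word_elem [GV (tail E a), GE a] w - word_elem [GE a] w :: 'r) \<in> cohn_relations E X"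
    unfolding cohn_relations_def by blast
  then show ?thesis using cohn_relation_in_ideal by (simp add: word_cong_def)
qed

lemma edge_head_cong: "a \<in> arcs E \<Longrightarrow> word_cong II [GE a, GV (head E a)] [GE a]"
proof -
  assume "a \<in> arcs E"
  then have "(\<lambda>w. word_elem [GE a, GV (head E a)] w - word_elem [GE a] w :: 'r) \<in> cohn_relations E X"
    unfolding cohn_relations_def by blast
  then show ?thesis using cohn_relation_in_ideal by (simp add: word_cong_def)
qed

lemma head_ghost_cong: "a \<in> arcs E \<Longrightarrow> word_cong II [GV (head E a), GS a] [GS a]"
proof -
  assume "a \<in> arcs E"
  then have "(\<lambda>w. word_elem [GV (head E a), GS a] w - word_elem [GS a] w :: 'r) \<in> cohn_relations E X"
    unfolding cohn_relations_def by blast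
  then show ?thesis using cohn_relation_in_ideal by (simp add: word_cong_def)
qed

lemma ghost_tail_cong: "a \<in> arcs E \<Longrightarrow> word_cong II [GS a, GV (tail E a)] [GS a]"
proof -
  assume "a \<in> arcs E"
  then have "(\<lambda>w. word_elem [GS a, GV (tail E a)] w - word_elem [GS a] w :: 'r) \<in> cohn_relations E X"
    unfolding cohn_relations_def by blast
  then show ?thesis using cohn_relation_in_ideal by (simp add: word_cong_def)
qed

lemma ghost_edge_cong: "a \<in> arcs E \<Longrightarrow> word_cong II [GS a, GE a] [GV (head E a)]"
proof -
  assume "a \<in> arcs E"
  then have "(\<lambda>w. word_elem [GS a, GE a] w - (if a = a then word_elem [GV (head E a)] w else 0) :: 'r)
      \<in> cohn_relations E X"
    unfolding cohn_relations_def by blast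
  then show ?thesis using cohn_relation_in_ideal by (simp add: word_cong_def)
qed

lemma ghost_edge_in_ideal:
  "a \<in> arcs E \<Longrightarrow> a' \<in> arcs E \<Longrightarrow> a \<noteq> a' \<Longrightarrow> word_elem [GS a, GE a'] \<in> II"
proof -
  assume "a \<in> arcs E" "a' \<in> arcs E" "a \<noteq> a'"
  moreover have "(\<lambda>w. word_elem [GS a, GE a'] w - (if a = a' then word_elem [GV (head E a)] w else 0) :: 'r)
      \<in> cohn_relations E X" if "a \<in> arcs E" "a' \<in> arcs E"
    unfolding cohn_relations_def using that by blast
  ultimately show ?thesis using cohn_relation_in_ideal by simp
qed

lemma vertex_edge_in_ideal:
  assumes "v \<in> verts E" "a \<in> arcs E" "v \<noteq> tail E a"
  shows "word_elem [GV v, GE a] \<in> II"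
proof -
  have "word_cong II ([GV v] @ [GE a]) ([GV v] @ [GV (tail E a), GE a])"
    using assms word_cong_sym[OF tail_edge_cong] by (intro word_cong_append_left) auto
  moreover have "word_elem ([GV v, GV (tail E a)] @ [GE a]) \<in> II"
    using assms tail_in_verts by (intro word_in_ideal_append_right vertex_vertex_in_ideal) auto
  ultimately show ?thesis by (auto intro: word_cong_in_ideal)
qed

lemma edge_vertex_in_ideal:
  assumes "b \<in> arcs E" "v \<in> verts E" "head E b \<noteq> v"
  shows "word_elem [GE b, GV v] \<in> II"
proof -
  have "word_cong II ([GE b] @ [GV v]) ([GE b, GV (head E b)] @ [GV v])"
    using assms word_cong_sym[OF edge_head_cong] by (intro word_cong_append_right) auto
  moreover have "word_elem ([GE b] @ [GV (head E b), GV v]) \<in> II"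
    using assms head_in_verts by (intro word_in_ideal_append_left vertex_vertex_in_ideal) auto
  ultimately show ?thesis by (auto intro: word_cong_in_ideal)
qed

lemma ghost_vertex_in_ideal:
  assumes "b \<in> arcs E" "v \<in> verts E" "tail E b \<noteq> v"
  shows "word_elem [GS b, GV v] \<in> II"
proof -
  have "word_cong II ([GS b] @ [GV v]) ([GS b, GV (tail E b)] @ [GV v])"
    using assms word_cong_sym[OF ghost_tail_cong] by (intro word_cong_append_right) auto
  moreover have "word_elem ([GS b] @ [GV (tail E b), GV v]) \<in> II"
    using assms tail_in_verts by (intro word_in_ideal_append_left vertex_vertex_in_ideal) auto
  ultimately show ?thesis by (auto intro: word_cong_in_ideal)
qed

lemma edge_edge_in_ideal:
  assumes "b \<in> arcs E" "a \<in> arcs E" "head E b \<noteq> tail E a"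
  shows "word_elem [GE b, GE a] \<in> II"
proof -
  have "word_cong II ([GE b] @ [GE a]) ([GE b, GV (head E b)] @ [GE a])"
    using assms word_cong_sym[OF edge_head_cong] by (intro word_cong_append_right) auto
  moreover have "word_elem ([GE b] @ [GV (head E b), GE a]) \<in> II"
    using assms head_in_verts by (intro word_in_ideal_append_left vertex_edge_in_ideal) auto
  ultimately show ?thesis by (auto intro: word_cong_in_ideal)
qed

lemma vertex_times_monomial_source:
  assumes "monomial_pair E (u, es) \<eta>"
  shows "word_cong II (GV u # monomial_word (u, es) \<eta>) (monomial_word (u, es) \<eta>)"
proof (cases es)
  case Nil
  then show ?thesis
    using assms vertex_vertex_cong word_cong_append_right[of "path_star_word \<eta>" "[GV u, GV u]" "[GV u]"]
    by (simp add: monomial_word_Nil monomial_pair_def cohn_is_path_Nil path_star_word_gens)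
next
  case (Cons a es')
  then show ?thesis
    using assms tail_edge_cong[of a] monomial_word_gens[OF assms]
      word_cong_append_right[of "map GE es' @ path_star_word \<eta>" "[GV (tail E a), GE a]" "[GE a]"]
    by (simp add: monomial_word_Cons monomial_pair_def cohn_is_path_Cons)
qed

lemma vertex_times_monomial_other:
  assumes "monomial_pair E (u, es) \<eta>" "v \<in> verts E" "v \<noteq> u"
  shows "word_elem (GV v # monomial_word (u, es) \<eta>) \<in> II"
proof (cases es)
  case Nil
  then show ?thesis
    using assms vertex_vertex_in_ideal[of v u] word_in_ideal_append_right[of "path_star_word \<eta>" "[GV v, GV u]"]
    by (simp add: monomial_word_Nil monomial_pair_def cohn_is_path_Nil path_star_word_gens)
next
  case (Cons a es')
  then show ?thesis
    using assms vertex_edge_in_ideal[of v a] monomial_word_gens[OF assms(1)]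
      word_in_ideal_append_right[of "map GE es' @ path_star_word \<eta>" "[GV v, GE a]"]
    by (simp add: monomial_word_Cons monomial_pair_def cohn_is_path_Cons)
qed

lemma edge_times_monomial:
  assumes pair: "monomial_pair E (u, es) \<eta>" and b: "b \<in> arcs E"
  shows "reduces_to_monomial E II (GE b # monomial_word (u, es) \<eta>)"
proof (cases es)
  case Nil
  let ?Q = "path_star_word \<eta>"
  have Q: "set ?Q \<subseteq> cohn_gens E" and u: "u \<in> verts E"
    using pair Nil by (auto simp: monomial_pair_def cohn_is_path_Nil path_star_word_gens)
  show ?thesis
  proof (cases "head E b = u")
    case True
    have "monomial_pair E (tail E b, [b]) \<eta>"
      using pair Nil True b tail_in_verts
      by (auto simp: monomial_pair_def cohn_is_path_Cons cohn_path_range_def)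
    moreover have "word_cong II ([GE b, GV u] @ ?Q) ([GE b] @ ?Q)"
      using True Q edge_head_cong[OF b] by (intro word_cong_append_right) auto
    ultimately show ?thesis
      using Nil by (intro reduces_to_monomialI) (auto simp: monomial_word_Nil monomial_word_Cons)
  next
    case False
    then have "word_elem ([GE b, GV u] @ ?Q) \<in> II"
      using b u Q by (intro word_in_ideal_append_right edge_vertex_in_ideal)
    then show ?thesis using Nil by (intro reduces_to_monomial_in_ideal) (simp add: monomial_word_Nil)
  qed
next
  case (Cons a es')
  let ?rest = "map GE es' @ path_star_word \<eta>"
  have a: "a \<in> arcs E" "tail E a = u"
    using pair Cons by (auto simp: monomial_pair_def cohn_is_path_Cons)
  show ?thesis
  proof (cases "head E b = u")
    case True
    have "monomial_pair E (tail E b, b # es) \<eta>"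
      using pair b tail_in_verts True
      by (auto simp: monomial_pair_def cohn_is_path_def cohn_path_range_Cons)
    moreover have "GE b # monomial_word (u, es) \<eta> = monomial_word (tail E b, b # es) \<eta>"
      by (simp add: monomial_word_Cons Cons)
    ultimately show ?thesis by (metis reduces_to_monomialI word_cong_refl)
  next
    case False
    then have "word_elem ([GE b, GE a] @ ?rest) \<in> II"
      using a b monomial_word_gens[OF pair] Cons
      by (intro word_in_ideal_append_right edge_edge_in_ideal) (auto simp: monomial_word_Cons)
    then show ?thesis using Cons by (intro reduces_to_monomial_in_ideal) (simp add: monomial_word_Cons)
  qed
qed

text \<open>For u = s(b), the word b^* u eta^* is congruent to the monomial r(b) (eta b)^*.\<close>
lemma ghost_times_vertex_monomial:
  assumes pair: "monomial_pair E (u, []) \<eta>" and b: "b \<in> arcs E"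
  shows "reduces_to_monomial E II (GS b # monomial_word (u, []) \<eta>)"
proof -
  let ?Q = "path_star_word \<eta>"
  have Q: "set ?Q \<subseteq> cohn_gens E" and u: "u \<in> verts E"
    using pair by (auto simp: monomial_pair_def cohn_is_path_Nil path_star_word_gens)
  show ?thesis
  proof (cases "tail E b = u")
    case False
    then have "word_elem ([GS b, GV u] @ ?Q) \<in> II"
      using b u Q by (intro word_in_ideal_append_right ghost_vertex_in_ideal)
    then show ?thesis by (intro reduces_to_monomial_in_ideal) (simp add: monomial_word_Nil)
  next
    case True
    obtain u' fs where \<eta>: "\<eta> = (u', fs)" by (cases \<eta>)
    have "word_cong II (GS b # monomial_word (u, []) \<eta>) ([GS b] @ ?Q)"
      using True Q ghost_tail_cong[OF b]
      by (simp add: monomial_word_Nil) (metis append_Cons append_Nil word_cong_append_right)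
    moreover have "word_cong II [GS b] [GV (head E b), GS b]"
      using head_ghost_cong[OF b] by (rule word_cong_sym)
    ultimately have cong: "word_cong II (GS b # monomial_word (u, []) \<eta>) ([GV (head E b), GS b] @ ?Q)"
      using Q by (blast intro: word_cong_trans word_cong_append_right)
    show ?thesis
    proof (cases fs)
      case Nil
      have "u' = tail E b" using pair Nil True by (simp add: \<eta> monomial_pair_def cohn_path_range_def)
      then have "word_cong II ([GV (head E b), GS b] @ ?Q) [GV (head E b), GS b]"
        using word_cong_append_left[of "[GV (head E b)]", OF _ ghost_tail_cong[OF b]] b head_in_verts
        by (simp add: \<eta> Nil path_star_word_def)
      moreover have "monomial_pair E (head E b, []) (tail E b, [b])"
        using b head_in_verts tail_in_verts
        by (simp add: monomial_pair_def cohn_is_path_Nil cohn_is_path_Cons cohn_path_range_def)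
      moreover have "monomial_word (head E b, []) (tail E b, [b]) = [GV (head E b), GS b]"
        by (simp add: monomial_word_Nil path_star_word_def)
      ultimately show ?thesis using cong by (metis reduces_to_monomialI word_cong_trans)
    next
      case (Cons f fs')
      have "cohn_is_path E \<eta>" "cohn_path_range E \<eta> = u"
        using pair by (auto simp: monomial_pair_def cohn_path_range_def)
      then have "monomial_pair E (head E b, []) (u', fs @ [b])"
        using b True head_in_verts
        by (auto simp: \<eta> monomial_pair_def cohn_is_path_def cohn_is_path_Nil cohn_path_range_def
            intro!: cohn_edge_chain_snoc)
      moreover have "monomial_word (head E b, []) (u', fs @ [b]) = [GV (head E b), GS b] @ ?Q"
        using Cons by (simp add: \<eta> monomial_word_Nil path_star_word_def)
      ultimately show ?thesis using cong by (metis reduces_to_monomialI)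
    qed
  qed
qed

lemma ghost_times_edge_monomial:
  assumes pair: "monomial_pair E (u, a # es) \<eta>" and b: "b \<in> arcs E"
  shows "reduces_to_monomial E II (GS b # monomial_word (u, a # es) \<eta>)"
proof -
  let ?rest = "map GE es @ path_star_word \<eta>"
  have a: "a \<in> arcs E" "tail E a = u" "cohn_edge_chain E (head E a) es"
    using pair by (auto simp: monomial_pair_def cohn_is_path_Cons)
  have rest: "set ?rest \<subseteq> cohn_gens E"
    using monomial_word_gens[OF pair] by (simp add: monomial_word_Cons)
  show ?thesis
  proof (cases "a = b")
    case False
    then have "word_elem ([GS b, GE a] @ ?rest) \<in> II"
      using a b rest by (intro word_in_ideal_append_right ghost_edge_in_ideal) auto
    then show ?thesis by (intro reduces_to_monomial_in_ideal) (simp add: monomial_word_Cons)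
  next
    case True
    have pair': "monomial_pair E (head E b, es) \<eta>"
      using pair a True head_in_verts by (auto simp: monomial_pair_def cohn_is_path_def cohn_path_range_Cons)
    have "word_cong II ([GS b, GE b] @ ?rest) ([GV (head E b)] @ ?rest)"
      using rest ghost_edge_cong[OF b] by (rule word_cong_append_right)
    moreover have "word_cong II (GV (head E b) # ?rest) (monomial_word (head E b, es) \<eta>)"
    proof (cases es)
      case Nil
      then show ?thesis by (simp add: monomial_word_Nil word_cong_refl)
    next
      case (Cons c es')
      then show ?thesis
        using vertex_times_monomial_source[OF pair'] by (simp add: monomial_word_Cons)
    qed
    ultimately show ?thesis
      using pair' True by (intro reduces_to_monomialI) (auto simp: monomial_word_Cons intro: word_cong_trans)
  qed
qed

lemma gen_times_monomial:
  assumes "x \<in> cohn_gens E" "monomial_pair E \<mu> \<eta>"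
  shows "reduces_to_monomial E II (x # monomial_word \<mu> \<eta>)"
proof -
  obtain u es where \<mu>: "\<mu> = (u, es)" by (cases \<mu>)
  have pair: "monomial_pair E (u, es) \<eta>" using assms(2) by (simp add: \<mu>)
  show ?thesis
  proof (cases x)
    case (GV v)
    show ?thesis
    proof (cases "v = u")
      case True
      then show ?thesis
        using reduces_to_monomialI[OF pair vertex_times_monomial_source[OF pair]] by (simp add: GV \<mu>)
    next
      case False
      then show ?thesis
        using reduces_to_monomial_in_ideal[OF vertex_times_monomial_other[OF pair]] assms(1)
        by (simp add: GV \<mu>)
    qed
  next
    case (GE b)
    then show ?thesis using edge_times_monomial[OF pair] assms(1) by (simp add: \<mu>)
  next
    case (GS b)
    then show ?thesis
      using ghost_times_vertex_monomial ghost_times_edge_monomial pair assms(1)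
      by (cases es) (simp_all add: \<mu>)
  qed
qed

lemma gen_reduces_to_monomial:
  assumes "x \<in> cohn_gens E"
  shows "reduces_to_monomial E II [x]"
proof (cases x)
  case (GV v)
  have pair: "monomial_pair E (v, []) (v, [])"
    using assms GV by (simp add: monomial_pair_def cohn_is_path_Nil)
  have "word_cong II [GV v] (monomial_word (v, []) (v, []))"
    using word_cong_sym[OF vertex_vertex_cong[of v]] assms GV
    by (simp add: monomial_word_Nil path_star_word_def)
  then show ?thesis using reduces_to_monomialI[OF pair] GV by simp
next
  case (GE a)
  then have "monomial_pair E (tail E a, [a]) (head E a, [])"
    "monomial_word (tail E a, [a]) (head E a, []) = [GE a, GV (head E a)]"
    using assms tail_in_verts head_in_verts
    by (simp_all add: monomial_pair_def cohn_is_path_Nil cohn_is_path_Cons cohn_path_range_def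
        monomial_word_Cons path_star_word_def)
  then show ?thesis
    using GE assms word_cong_sym[OF edge_head_cong] by (auto intro: reduces_to_monomialI)
next
  case (GS a)
  then have "monomial_pair E (head E a, []) (tail E a, [a])"
    "monomial_word (head E a, []) (tail E a, [a]) = [GV (head E a), GS a]"
    using assms tail_in_verts head_in_verts
    by (simp_all add: monomial_pair_def cohn_is_path_Nil cohn_is_path_Cons cohn_path_range_def
        monomial_word_Nil path_star_word_def)
  then show ?thesis
    using GS assms word_cong_sym[OF head_ghost_cong] by (auto intro: reduces_to_monomialI)
qed

lemma word_reduces_to_monomial:
  "w \<noteq> [] \<Longrightarrow> set w \<subseteq> cohn_gens E \<Longrightarrow> reduces_to_monomial E II w"
proof (induction w)
  case (Cons x w)
  then have x: "x \<in> cohn_gens E" and w: "set w \<subseteq> cohn_gens E" by auto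
  show ?case
  proof (cases "w = []")
    case True
    then show ?thesis using gen_reduces_to_monomial[OF x] by simp
  next
    case False
    then have "word_elem w \<in> II \<or> (\<exists>\<mu> \<eta>. monomial_pair E \<mu> \<eta> \<and> word_cong II w (monomial_word \<mu> \<eta>))"
      using Cons.IH w by (simp add: reduces_to_monomial_def)
    then show ?thesis
    proof (elim disjE exE conjE)
      assume "word_elem w \<in> II"
      then show ?thesis
        using word_in_ideal_append_left[of "[x]" w] x by (simp add: reduces_to_monomial_in_ideal)
    next
      fix \<mu> \<eta> assume "monomial_pair E \<mu> \<eta>" "word_cong II w (monomial_word \<mu> \<eta>)"
      then show ?thesis
        using word_cong_append_left[of "[x]" w "monomial_word \<mu> \<eta>"] x gen_times_monomial[OF x]
          reduces_to_monomial_cong[of "x # w" "x # monomial_word \<mu> \<eta>"]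
        by simp
    qed
  qed
qed simp

section \<open>Homogeneous elements modulo the relations\<close>

lemma path_weight_foldl:
  assumes "set es \<subseteq> arcs E" "bm_in G I (of_brandt s)"
  shows "of_brandt (foldl (\<lambda>acc a. brandt_mult G acc (Some (we a))) s es)
    = bm_mult G (of_brandt s) (word_weight (map GE es))"
  using assms
proof (induction es arbitrary: s)
  case (Cons a es)
  then have a: "a \<in> arcs E" and es: "set es \<subseteq> arcs E" by auto
  have we: "gen_weight (GE a) = BElem (we a)" by (simp add: gen_weight_simps a)
  have "bm_in G I (of_brandt (brandt_mult G s (Some (we a))))"
    using bm_in_mult[OF monoid Cons.prems(2) bm_in_gen_weight[of "GE a"]] by (simp add: of_brandt_mult we)
  then show ?case
    using Cons.IH[OF es]
      bm_mult_assoc[OF monoid Cons.prems(2) bm_in_gen_weight[of "GE a"] bm_in_word_weight[of "map GE es"]]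
    by (simp add: of_brandt_mult we word_weight_Cons)
qed simp

lemma word_weight_path_word:
  assumes "cohn_is_path E \<mu>"
  shows "word_weight (path_word \<mu>) = of_brandt (path_weight G wv we \<mu>)"
proof -
  obtain v es where \<mu>: "\<mu> = (v, es)" by (cases \<mu>)
  show ?thesis
  proof (cases es)
    case Nil
    then show ?thesis
      using assms by (simp add: \<mu> path_word_def path_weight_def word_weight_single gen_weight_simps cohn_is_path_Nil)
  next
    case (Cons a es')
    then have "a \<in> arcs E" "set es' \<subseteq> arcs E"
      using assms by (auto simp: \<mu> cohn_is_path_def dest: cohn_edge_chain_arcs)
    moreover have "bm_in G I (of_brandt (Some (we a)))"
      using bm_in_gen_weight[of "GE a"] \<open>a \<in> arcs E\<close> by (simp add: gen_weight_simps)
    ultimately show ?thesis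
      using path_weight_foldl[of es' "Some (we a)"]
      by (simp add: \<mu> Cons path_word_def path_weight_def word_weight_Cons gen_weight_simps)
  qed
qed

lemma word_weight_ghosts:
  "set es \<subseteq> arcs E \<Longrightarrow> word_weight (map GS (rev es)) = bm_inv G (word_weight (map GE es))"
proof (induction es)
  case (Cons a es)
  then have a: "a \<in> arcs E" by simp
  have "word_weight (map GS (rev (a # es))) = bm_mult G (word_weight (map GS (rev es))) (gen_weight (GS a))"
    by (simp add: word_weight_append word_weight_single)
  also have "\<dots> = bm_mult G (bm_inv G (word_weight (map GE es))) (bm_inv G (gen_weight (GE a)))"
    using Cons by (simp add: gen_weight_simps a)
  also have "\<dots> = bm_inv G (bm_mult G (gen_weight (GE a)) (word_weight (map GE es)))"
    by (rule bm_inv_mult[OF group bm_in_gen_weight bm_in_word_weight, symmetric])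
  finally show ?case by (simp add: word_weight_Cons)
qed simp

lemma word_weight_path_star_word:
  assumes "cohn_is_path E \<eta>"
  shows "word_weight (path_star_word \<eta>) = bm_inv G (word_weight (path_word \<eta>))"
proof -
  obtain v es where \<eta>: "\<eta> = (v, es)" by (cases \<eta>)
  show ?thesis
  proof (cases es)
    case Nil
    with assms obtain i where "wv v = (i, \<one>\<^bsub>G\<^esub>, i)"
      using vertex_weight by (auto simp: \<eta> cohn_is_path_Nil)
    then show ?thesis
      using assms Nil group monoid.inv_one[OF monoid]
      by (simp add: \<eta> path_star_word_def path_word_def word_weight_single gen_weight_simps cohn_is_path_Nil)
  next
    case (Cons a es')
    then show ?thesis
      using assms word_weight_ghosts[of es]
      by (auto simp: \<eta> path_star_word_def path_word_def cohn_is_path_def dest: cohn_edge_chain_arcs)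
  qed
qed

lemma word_weight_monomial_word:
  "monomial_pair E \<mu> \<eta> \<Longrightarrow> word_weight (monomial_word \<mu> \<eta>)
    = of_brandt (brandt_mult G (path_weight G wv we \<mu>) (brandt_inv G (path_weight G wv we \<eta>)))"
  by (simp add: monomial_pair_def monomial_word_def word_weight_append word_weight_path_star_word
      word_weight_path_word of_brandt_mult of_brandt_inv)

lemma edge_chain_weight:
  assumes "cohn_edge_chain E v es" "es \<noteq> []"
  obtains i g j where "word_weight (map GE es) = BElem (i, g, j)" "wv v = (i, \<one>\<^bsub>G\<^esub>, i)"
    "wv (cohn_path_range E (v, es)) = (j, \<one>\<^bsub>G\<^esub>, j)"
  using assms
proof (induction es arbitrary: v thesis)
  case (Cons a es)
  then have a: "a \<in> arcs E" "tail E a = v" "cohn_edge_chain E (head E a) es" by auto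
  obtain i g j where w: "we a = (i, g, j)" "wv (tail E a) = (i, \<one>\<^bsub>G\<^esub>, i)" "wv (head E a) = (j, \<one>\<^bsub>G\<^esub>, j)"
    using a(1) by (rule edge_weight)
  show ?case
  proof (cases es)
    case Nil
    then show ?thesis
      using Cons.prems(1) w a by (simp add: word_weight_single gen_weight_simps cohn_path_range_def)
  next
    case (Cons b es')
    obtain i' g' j' where w': "word_weight (map GE es) = BElem (i', g', j')" "wv (head E a) = (i', \<one>\<^bsub>G\<^esub>, i')"
      "wv (cohn_path_range E (head E a, es)) = (j', \<one>\<^bsub>G\<^esub>, j')"
      using Cons.IH[OF _ a(3)] Cons by blast
    then show ?thesis
      using Cons.prems(1) w a by (simp add: word_weight_Cons gen_weight_simps cohn_path_range_Cons)
  qed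
qed simp

lemma path_word_weight:
  assumes "cohn_is_path E \<mu>"
  obtains i g j where "word_weight (path_word \<mu>) = BElem (i, g, j)"
    "wv (cohn_path_range E \<mu>) = (j, \<one>\<^bsub>G\<^esub>, j)"
proof -
  obtain v es where \<mu>: "\<mu> = (v, es)" by (cases \<mu>)
  show ?thesis
  proof (cases es)
    case Nil
    then show ?thesis
      using assms vertex_weight that
      by (auto simp: \<mu> path_word_def word_weight_single gen_weight_simps cohn_path_range_def cohn_is_path_Nil)
  next
    case (Cons a es')
    then have "cohn_edge_chain E v es" "es \<noteq> []" using assms by (auto simp: \<mu> cohn_is_path_def)
    then obtain i g j where "word_weight (map GE es) = BElem (i, g, j)"
      "wv (cohn_path_range E (v, es)) = (j, \<one>\<^bsub>G\<^esub>, j)"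
      by (rule edge_chain_weight)
    then show ?thesis using that Cons by (simp add: \<mu> path_word_def)
  qed
qed

text \<open>Both paths end at the same vertex, so the product of their weights is defined.\<close>
lemma monomial_word_weight_BElem:
  assumes "monomial_pair E \<mu> \<eta>"
  obtains \<sigma> where "word_weight (monomial_word \<mu> \<eta>) = BElem \<sigma>"
proof -
  have p: "cohn_is_path E \<mu>" "cohn_is_path E \<eta>" "cohn_path_range E \<mu> = cohn_path_range E \<eta>"
    using assms by (auto simp: monomial_pair_def)
  obtain i g j where \<mu>: "word_weight (path_word \<mu>) = BElem (i, g, j)" "wv (cohn_path_range E \<mu>) = (j, \<one>\<^bsub>G\<^esub>, j)"
    using path_word_weight[OF p(1)] by blast
  obtain i' g' j' where \<eta>: "word_weight (path_word \<eta>) = BElem (i', g', j')" "wv (cohn_path_range E \<eta>) = (j', \<one>\<^bsub>G\<^esub>, j')"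
    using path_word_weight[OF p(2)] by blast
  have "j = j'" using \<mu> \<eta> p(3) by simp
  then show ?thesis
    using that \<mu> \<eta> word_weight_path_star_word[OF p(2)] by (simp add: monomial_word_def word_weight_append)
qed

lemma weighted_monomials_weight:
  "weighted_monomials E G wv we s =
     {monomial_word \<mu> \<eta> | \<mu> \<eta>. monomial_pair E \<mu> \<eta> \<and> word_weight (monomial_word \<mu> \<eta>) = of_brandt s}"
  unfolding weighted_monomials_eq
  by (intro Collect_cong ex_cong1 conj_cong refl) (simp add: word_weight_monomial_word)

lemma weighted_monomial_props:
  assumes "m \<in> weighted_monomials E G wv we s"
  shows "word_weight m = of_brandt s" "m \<noteq> []" "set m \<subseteq> cohn_gens E"
proof -
  obtain \<mu> \<eta> where "m = monomial_word \<mu> \<eta>" "monomial_pair E \<mu> \<eta>" "word_weight m = of_brandt s"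
    using assms by (auto simp: weighted_monomials_weight)
  then show "word_weight m = of_brandt s" "m \<noteq> []" "set m \<subseteq> cohn_gens E"
    using monomial_word_ne[of \<mu> \<eta>] monomial_word_gens[of E \<mu> \<eta>] by simp_all
qed

lemma weighted_monomials_None: "weighted_monomials E G wv we None = {}"
  by (auto simp: weighted_monomials_weight elim: monomial_word_weight_BElem)

definition weighted_span :: "('i \<times> 'a \<times> 'i) option \<Rightarrow> (('v, 'e) cohn_gen list \<Rightarrow> 'r) set" where
  "weighted_span s = {f \<in> carrier (cohn_free E). \<forall>w. f w \<noteq> 0 \<longrightarrow> w \<in> weighted_monomials E G wv we s}"

lemma weighted_span_None: "weighted_span None = {\<lambda>w. 0}"
  by (auto simp: weighted_span_def weighted_monomials_None cohn_free_eq free_algebra_carrier_iff)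

lemma weighted_span_zero: "(\<lambda>w. 0) \<in> weighted_span s"
  by (simp add: weighted_span_def cohn_free_eq free_algebra_carrier_iff)

lemma weighted_span_add:
  assumes "f \<in> weighted_span s" "g \<in> weighted_span s"
  shows "(\<lambda>w. f w + g w) \<in> weighted_span s"
proof -
  have "f w + g w \<noteq> 0 \<Longrightarrow> f w \<noteq> 0 \<or> g w \<noteq> 0" for w by auto
  then show ?thesis using assms by (auto simp: weighted_span_def cohn_free_eq free_algebra_add_closed)
qed

lemma weighted_span_uminus: "f \<in> weighted_span s \<Longrightarrow> (\<lambda>w. - f w) \<in> weighted_span s"
  by (simp add: weighted_span_def cohn_free_eq free_algebra_uminus_closed)

lemma weighted_span_scale:
  assumes "f \<in> weighted_span s"
  shows "(\<lambda>w. r * f w) \<in> weighted_span s"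
proof -
  have "r * f w \<noteq> 0 \<Longrightarrow> f w \<noteq> 0" for w by auto
  then show ?thesis using assms by (auto simp: weighted_span_def cohn_free_eq free_algebra_scale_closed)
qed

lemma weighted_span_sum:
  "finite T \<Longrightarrow> (\<And>t. t \<in> T \<Longrightarrow> F t \<in> weighted_span s) \<Longrightarrow> (\<lambda>w. \<Sum>t\<in>T. F t w) \<in> weighted_span s"
proof (induction T rule: finite_induct)
  case (insert a T)
  then show ?case using weighted_span_add[of "F a" s "\<lambda>w. \<Sum>t\<in>T. F t w"] by simp
qed (simp add: weighted_span_zero)

lemma weighted_span_closed: "f \<in> weighted_span s \<Longrightarrow> f \<in> carrier (cohn_free E)"
  by (simp add: weighted_span_def)

lemma weighted_span_Nil: "f \<in> weighted_span s \<Longrightarrow> f [] = 0"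
  using weighted_monomial_props(2) by (auto simp: weighted_span_def)

lemma weighted_span_weight: "f \<in> weighted_span s \<Longrightarrow> f w \<noteq> 0 \<Longrightarrow> word_weight w = of_brandt s"
  using weighted_monomial_props(1) by (auto simp: weighted_span_def)

lemma word_elem_in_weighted_span:
  "m \<in> weighted_monomials E G wv we s \<Longrightarrow> word_elem m \<in> weighted_span s"
proof -
  assume m: "m \<in> weighted_monomials E G wv we s"
  then have "word_elem m \<in> carrier (cohn_free E)"
    using weighted_monomial_props(3)[OF m] by (simp add: cohn_free_eq word_elem_closed)
  then show ?thesis using m by (auto simp: weighted_span_def word_elem_def)
qed

lemma word_in_ideal_if_cong_other_weight:
  assumes "word_cong II u u'" "word_weight u \<noteq> word_weight u'"
  shows "word_elem u \<in> II"
proof -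
  have "restrict_weight {word_weight u} (\<lambda>w. word_elem u w - word_elem u' w) = word_elem u"
    using assms(2) by (auto simp: restrict_weight_def word_elem_def fun_eq_iff)
  then show ?thesis
    using restrict_weight_in_cohn_ideal assms(1) unfolding word_cong_def by metis
qed

lemma word_cong_weighted_span:
  assumes "set w \<subseteq> cohn_gens E" "w \<noteq> []"
  obtains g where "g \<in> weighted_span (to_brandt (word_weight w))" "(\<lambda>x. word_elem w x - g x) \<in> II"
proof -
  note result = that
  have zero: thesis if "word_elem w \<in> II"
    using that weighted_span_zero by (intro result[of "\<lambda>x. 0"]) simp_all
  from word_reduces_to_monomial[OF assms(2,1)] show thesis
    unfolding reduces_to_monomial_def
  proof (elim disjE exE conjE)
    fix \<mu> \<eta> assume pair: "monomial_pair E \<mu> \<eta>" and cong: "word_cong II w (monomial_word \<mu> \<eta>)"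
    show thesis
    proof (cases "word_weight (monomial_word \<mu> \<eta>) = word_weight w")
      case True
      obtain \<sigma> where "word_weight (monomial_word \<mu> \<eta>) = BElem \<sigma>"
        using pair by (rule monomial_word_weight_BElem)
      then have "word_weight (monomial_word \<mu> \<eta>) = of_brandt (to_brandt (word_weight w))"
        using True by simp
      then have "monomial_word \<mu> \<eta> \<in> weighted_monomials E G wv we (to_brandt (word_weight w))"
        unfolding weighted_monomials_weight using pair by blast
      then show thesis
        using cong by (intro result[of "word_elem (monomial_word \<mu> \<eta>)"] word_elem_in_weighted_span)
          (simp_all add: word_cong_def)
    next
      case False
      then show thesis using word_in_ideal_if_cong_other_weight[OF cong] zero by simp
    qed
  qed (rule zero)
qed

text \<open>For s = None the span is zero, so homogeneous elements of weight zero lie in the ideal.\<close>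
lemma homogeneous_cong_weighted_span:
  assumes f: "f \<in> carrier (cohn_free E)" and hom: "\<forall>w. f w \<noteq> 0 \<longrightarrow> word_weight w = of_brandt s"
  obtains g where "g \<in> weighted_span s" "(\<lambda>x. f x - g x) \<in> II"
proof -
  let ?S = "{w. f w \<noteq> 0}"
  have S: "finite ?S" "\<And>w. w \<in> ?S \<Longrightarrow> set w \<subseteq> cohn_gens E \<and> w \<noteq> []"
    using f hom by (auto simp: cohn_free_eq free_algebra_carrier_iff)
  have "\<exists>g \<in> weighted_span s. (\<lambda>x. word_elem w x - g x) \<in> II" if "w \<in> ?S" for w
    using S(2)[OF that] hom that by (auto elim!: word_cong_weighted_span)
  then obtain gs where gs: "\<And>w. w \<in> ?S \<Longrightarrow> gs w \<in> weighted_span s \<and> (\<lambda>x. word_elem w x - gs w x) \<in> II"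
    by metis
  let ?g = "\<lambda>x. \<Sum>w\<in>?S. f w * gs w x"
  have span: "?g \<in> weighted_span s"
    using gs by (intro weighted_span_sum[OF S(1)] weighted_span_scale) auto
  have diff: "(\<lambda>x. f x - ?g x) = (\<lambda>x. \<Sum>w\<in>?S. f w * (word_elem w x - gs w x))"
  proof (rule ext)
    fix x
    have "f x = (\<Sum>w\<in>?S. f w * word_elem w x)"
      by (subst finite_support_decomp[OF S(1)]) (simp add: scaled_word_eq_mult)
    then show "f x - ?g x = (\<Sum>w\<in>?S. f w * (word_elem w x - gs w x))"
      by (simp add: right_diff_distrib sum_subtractf)
  qed
  have "(\<lambda>x. \<Sum>w\<in>?S. f w * (word_elem w x - gs w x)) \<in> II"
    using gs by (intro cohn_ideal_sum[OF S(1)] cohn_ideal_scale_left) auto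
  then show thesis using that[OF span] by (simp only: diff)
qed

section \<open>The grading of the Cohn path algebra\<close>

abbreviation CPA where "CPA \<equiv> (cohn_path_algebra E X :: (('v, 'e) cohn_gen list \<Rightarrow> 'r) set ring)"
abbreviation cls where "cls f \<equiv> cohn_class E X (f :: ('v, 'e) cohn_gen list \<Rightarrow> 'r)"
abbreviation component where
  "component \<equiv> (cohn_component E X G wv we :: _ \<Rightarrow> (('v, 'e) cohn_gen list \<Rightarrow> 'r) set set)"

lemma class_ring_hom: "cohn_class E X \<in> ring_hom (cohn_free E) (cohn_free E Quot II)"
  unfolding cohn_class_def by (rule ideal.rcos_ring_hom[OF ideal_cohn_ideal])

lemma carrier_CPA: "carrier CPA = cls ` {f \<in> carrier (cohn_free E). f [] = 0}"
  by (simp add: cohn_path_algebra_def)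

lemma CPA_add: "x \<oplus>\<^bsub>CPA\<^esub> y = x \<oplus>\<^bsub>cohn_free E Quot II\<^esub> y"
  by (simp add: cohn_path_algebra_def)

lemma CPA_zero: "\<zero>\<^bsub>CPA\<^esub> = II"
  by (simp add: cohn_path_algebra_def FactRing_def)

lemma cls_add:
  "f \<in> carrier (cohn_free E) \<Longrightarrow> g \<in> carrier (cohn_free E) \<Longrightarrow> cls f \<oplus>\<^bsub>CPA\<^esub> cls g = cls (\<lambda>w. f w + g w)"
  using ring_hom_add[OF class_ring_hom] by (simp add: CPA_add cohn_free_eq free_algebra_add)

lemma cls_mult:
  "f \<in> carrier (cohn_free E) \<Longrightarrow> g \<in> carrier (cohn_free E) \<Longrightarrow> cls f \<otimes>\<^bsub>CPA\<^esub> cls g = cls (f \<otimes>\<^bsub>cohn_free E\<^esub> g)"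
  using ring_hom_mult[OF class_ring_hom] by (simp add: cohn_path_algebra_def)

lemma cls_eq_zero_iff: "f \<in> carrier (cohn_free E) \<Longrightarrow> cls f = II \<longleftrightarrow> f \<in> II"
proof -
  interpret ideal II "cohn_free E" by (rule ideal_cohn_ideal)
  assume "f \<in> carrier (cohn_free E)"
  then show ?thesis
    using a_rcos_self[of f] a_rcos_const[of f] by (auto simp: cohn_class_def)
qed

lemma cls_zero: "cls (\<lambda>w. 0) = II"
  using cls_eq_zero_iff cohn_ideal_zero cohn_ideal_closed by blast

lemma cls_eqI:
  assumes f: "f \<in> carrier (cohn_free E)" and g: "g \<in> carrier (cohn_free E)"
    and diff: "(\<lambda>w. f w - g w) \<in> II"
  shows "cls f = cls g"
proof -
  interpret ideal II "cohn_free E" by (rule ideal_cohn_ideal)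
  have "f \<ominus>\<^bsub>cohn_free E\<^esub> g \<in> II"
    using f g diff by (simp add: cohn_free_eq free_algebra_minus)
  then have "f \<in> II +>\<^bsub>cohn_free E\<^esub> g" using a_rcos_module_minus[OF ring_cohn_free g f] by blast
  then show ?thesis unfolding cohn_class_def by (rule a_repr_independence'[OF _ g, symmetric])
qed

lemma abelian_group_CPA: "abelian_group CPA"
proof -
  interpret Q: ring "cohn_free E Quot II" by (rule ideal.quotient_is_ring[OF ideal_cohn_ideal])
  have sub: "carrier CPA \<subseteq> carrier (cohn_free E Quot II)"
    using ring_hom_closed[OF class_ring_hom] by (auto simp: carrier_CPA)
  show ?thesis
  proof (rule abelian_groupI)
    fix x y assume "x \<in> carrier CPA" "y \<in> carrier CPA"
    then obtain f g where "x = cls f" "f \<in> carrier (cohn_free E)" "f [] = 0"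
      "y = cls g" "g \<in> carrier (cohn_free E)" "g [] = 0"
      by (auto simp: carrier_CPA)
    then show "x \<oplus>\<^bsub>CPA\<^esub> y \<in> carrier CPA"
      using cls_add by (auto simp: carrier_CPA cohn_free_eq free_algebra_add_closed)
  next
    show "\<zero>\<^bsub>CPA\<^esub> \<in> carrier CPA"
      using cls_zero by (force simp: CPA_zero carrier_CPA cohn_free_eq free_algebra_carrier_iff)
  next
    fix x y z assume "x \<in> carrier CPA" "y \<in> carrier CPA" "z \<in> carrier CPA"
    then show "x \<oplus>\<^bsub>CPA\<^esub> y \<oplus>\<^bsub>CPA\<^esub> z = x \<oplus>\<^bsub>CPA\<^esub> (y \<oplus>\<^bsub>CPA\<^esub> z)"
      using sub by (simp add: CPA_add Q.a_assoc subset_iff)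
  next
    fix x y assume "x \<in> carrier CPA" "y \<in> carrier CPA"
    then show "x \<oplus>\<^bsub>CPA\<^esub> y = y \<oplus>\<^bsub>CPA\<^esub> x"
      using sub by (simp add: CPA_add Q.a_comm subset_iff)
  next
    fix x assume "x \<in> carrier CPA"
    then show "\<zero>\<^bsub>CPA\<^esub> \<oplus>\<^bsub>CPA\<^esub> x = x"
      using sub by (simp add: CPA_add subset_iff cohn_path_algebra_def)
  next
    fix x assume "x \<in> carrier CPA"
    then obtain f where f: "x = cls f" "f \<in> carrier (cohn_free E)" "f [] = 0" by (auto simp: carrier_CPA)
    have n: "(\<lambda>w. - f w) \<in> carrier (cohn_free E)"
      using f by (simp add: cohn_free_eq free_algebra_uminus_closed)
    then have "cls (\<lambda>w. - f w) \<in> carrier CPA" using f by (auto simp: carrier_CPA)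
    moreover have "cls (\<lambda>w. - f w) \<oplus>\<^bsub>CPA\<^esub> x = \<zero>\<^bsub>CPA\<^esub>"
      using cls_add[OF n f(2)] f cls_zero by (simp add: CPA_zero)
    ultimately show "\<exists>y\<in>carrier CPA. y \<oplus>\<^bsub>CPA\<^esub> x = \<zero>\<^bsub>CPA\<^esub>" by blast
  qed
qed

interpretation CPA: abelian_group CPA
  by (rule abelian_group_CPA)

lemma CPA_a_inv:
  assumes "f \<in> carrier (cohn_free E)" "f [] = 0"
  shows "\<ominus>\<^bsub>CPA\<^esub> cls f = cls (\<lambda>w. - f w)"
proof (rule CPA.minus_equality)
  have n: "(\<lambda>w. - f w) \<in> carrier (cohn_free E)"
    using assms by (simp add: cohn_free_eq free_algebra_uminus_closed)
  then show "cls (\<lambda>w. - f w) \<oplus>\<^bsub>CPA\<^esub> cls f = \<zero>\<^bsub>CPA\<^esub>"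
    using cls_add[OF n assms(1)] cls_zero by (simp add: CPA_zero)
  show "cls f \<in> carrier CPA" "cls (\<lambda>w. - f w) \<in> carrier CPA"
    using assms n by (auto simp: carrier_CPA)
qed

lemma finsum_cls:
  assumes "finite T" "\<And>t. t \<in> T \<Longrightarrow> F t \<in> carrier (cohn_free E) \<and> F t [] = 0"
  shows "finsum CPA (\<lambda>t. cls (F t)) T = cls (\<lambda>w. \<Sum>t\<in>T. F t w)"
  using assms
proof (induction T rule: finite_induct)
  case empty
  then show ?case using cls_zero by (simp add: CPA_zero)
next
  case (insert a T)
  have "(\<lambda>w. \<Sum>t\<in>T. F t w) \<in> carrier (cohn_free E)"
    using insert by (simp add: cohn_free_eq free_algebra_sum_closed)
  moreover have "cls (F t) \<in> carrier CPA" if "t \<in> insert a T" for t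
    using insert.prems[OF that] by (auto simp: carrier_CPA)
  ultimately show ?case
    using insert cls_add by (simp add: CPA.finsum_insert Pi_def)
qed

lemma cohn_component_eq: "component s = cls ` weighted_span s"
proof (cases s)
  case None
  then show ?thesis using cls_zero by (simp add: cohn_component_def weighted_span_None CPA_zero)
qed (simp add: cohn_component_def weighted_span_def)

lemma component_None: "component None = {\<zero>\<^bsub>CPA\<^esub>}"
  by (simp add: cohn_component_def)

lemma component_subset: "component s \<subseteq> carrier CPA"
  using weighted_span_closed weighted_span_Nil by (auto simp: cohn_component_eq carrier_CPA)

lemma cls_in_component:
  assumes "f \<in> carrier (cohn_free E)" "\<forall>w. f w \<noteq> 0 \<longrightarrow> word_weight w = of_brandt s"
  shows "cls f \<in> component s"
proof -
  obtain g where g: "g \<in> weighted_span s" "(\<lambda>w. f w - g w) \<in> II"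
    using homogeneous_cong_weighted_span[OF assms] by blast
  then have "cls f = cls g" using assms(1) weighted_span_closed by (intro cls_eqI)
  then show ?thesis using g(1) by (simp add: cohn_component_eq)
qed

lemma subgroup_component: "subgroup (component s) (add_monoid CPA)"
proof (rule CPA.add.subgroupI)
  show "component s \<subseteq> carrier CPA" by (rule component_subset)
  show "component s \<noteq> {}" using weighted_span_zero by (auto simp: cohn_component_eq)
next
  fix x assume "x \<in> component s"
  then obtain f where "x = cls f" "f \<in> weighted_span s" by (auto simp: cohn_component_eq)
  then show "\<ominus>\<^bsub>CPA\<^esub> x \<in> component s"
    using CPA_a_inv weighted_span_closed weighted_span_Nil weighted_span_uminus
    by (auto simp: cohn_component_eq)
next
  fix x y assume "x \<in> component s" "y \<in> component s"
  then obtain f g where "x = cls f" "f \<in> weighted_span s" "y = cls g" "g \<in> weighted_span s"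
    by (auto simp: cohn_component_eq)
  then show "x \<oplus>\<^bsub>CPA\<^esub> y \<in> component s"
    using cls_add weighted_span_closed weighted_span_add by (auto simp: cohn_component_eq)
qed

lemma sum_restrict_weight:
  assumes "finite T" and f: "\<And>w. f w \<noteq> 0 \<Longrightarrow> to_brandt (word_weight w) \<in> T \<and> word_weight w \<noteq> BOne"
  shows "(\<lambda>w. \<Sum>t\<in>T. restrict_weight {of_brandt t} f w) = f"
proof (rule ext)
  fix w
  show "(\<Sum>t\<in>T. restrict_weight {of_brandt t} f w) = f w"
  proof (cases "f w = 0")
    case False
    then have "of_brandt (to_brandt (word_weight w)) = word_weight w"
      using f of_brandt_to_brandt by blast
    then have "restrict_weight {of_brandt t} f w = (if t = to_brandt (word_weight w) then f w else 0)" for t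
      by (auto simp: restrict_weight_def)
    then show ?thesis using False f assms(1) by simp
  next
    case True
    then have "restrict_weight {of_brandt t} f w = 0" for t by (simp add: restrict_weight_def)
    then show ?thesis using True by simp
  qed
qed

lemma carrier_CPA_sums:
  "carrier CPA = {finsum CPA x T | x T. finite T \<and> T \<subseteq> brandt_semigroup G I \<and> (\<forall>s\<in>T. x s \<in> component s)}"
proof (intro equalityI subsetI)
  fix y assume "y \<in> carrier CPA"
  then obtain f where f: "y = cls f" "f \<in> carrier (cohn_free E)" "f [] = 0" by (auto simp: carrier_CPA)
  let ?S = "{w. f w \<noteq> 0}"
  define T where "T = to_brandt ` word_weight ` ?S"
  define x where "x t = cls (restrict_weight {of_brandt t} f)" for t
  have S: "finite ?S" "\<And>w. w \<in> ?S \<Longrightarrow> set w \<subseteq> cohn_gens E \<and> w \<noteq> []"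
    using f by (auto simp: cohn_free_eq free_algebra_carrier_iff)
  have T: "finite T" "T \<subseteq> brandt_semigroup G I"
    using S(1) bm_in_word_weight to_brandt_in_semigroup by (auto simp: T_def)
  have restrict: "restrict_weight {of_brandt t} f \<in> carrier (cohn_free E) \<and> restrict_weight {of_brandt t} f [] = 0"
    for t by (intro conjI restrict_weight_closed[OF f(2)]) (simp add: restrict_weight_def f(3))
  have "x t \<in> component t" for t
    unfolding x_def using restrict by (intro cls_in_component) (auto simp: restrict_weight_def)
  moreover have "finsum CPA x T = y"
    unfolding x_def finsum_cls[OF T(1) restrict] f(1)
    using S(2) word_weight_neq_BOne by (subst sum_restrict_weight[OF T(1)]) (auto simp: T_def)
  ultimately show "y \<in> {finsum CPA x T | x T. finite T \<and> T \<subseteq> brandt_semigroup G I \<and> (\<forall>s\<in>T. x s \<in> component s)}"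
    using T by blast
next
  fix y assume "y \<in> {finsum CPA x T | x T. finite T \<and> T \<subseteq> brandt_semigroup G I \<and> (\<forall>s\<in>T. x s \<in> component s)}"
  then show "y \<in> carrier CPA" using component_subset by (auto intro!: CPA.finsum_closed)
qed

text \<open>Restrict a vanishing sum to the words of a single weight; the ideal is graded.\<close>
lemma component_sum_eq_zero:
  assumes T: "finite T" "\<forall>s\<in>T. x s \<in> component s" "finsum CPA x T = \<zero>\<^bsub>CPA\<^esub>" and s: "s \<in> T"
  shows "x s = \<zero>\<^bsub>CPA\<^esub>"
proof -
  have "\<forall>t\<in>T. \<exists>f. f \<in> weighted_span t \<and> x t = cls f"
    using T(2) by (auto simp: cohn_component_eq)
  then obtain F where F: "\<And>t. t \<in> T \<Longrightarrow> F t \<in> weighted_span t \<and> x t = cls (F t)"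
    by metis
  have F_carr: "\<And>t. t \<in> T \<Longrightarrow> F t \<in> carrier (cohn_free E) \<and> F t [] = 0"
    using F weighted_span_closed weighted_span_Nil by blast
  have "x t \<in> carrier CPA" if "t \<in> T" for t
    using that T(2) component_subset by blast
  then have "finsum CPA x T = finsum CPA (\<lambda>t. cls (F t)) T"
    using F by (intro CPA.finsum_cong') auto
  also have "\<dots> = cls (\<lambda>w. \<Sum>t\<in>T. F t w)" using F_carr by (rule finsum_cls[OF T(1)])
  finally have "cls (\<lambda>w. \<Sum>t\<in>T. F t w) = II" using T(3) by (simp add: CPA_zero)
  moreover have "(\<lambda>w. \<Sum>t\<in>T. F t w) \<in> carrier (cohn_free E)"
    using F_carr unfolding cohn_free_eq by (intro free_algebra_sum_closed[OF T(1)]) auto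
  ultimately have "(\<lambda>w. \<Sum>t\<in>T. F t w) \<in> II" using cls_eq_zero_iff by blast
  moreover have "restrict_weight {of_brandt s} (\<lambda>w. \<Sum>t\<in>T. F t w) = F s"
  proof (rule ext)
    fix w
    show "restrict_weight {of_brandt s} (\<lambda>w. \<Sum>t\<in>T. F t w) w = F s w"
    proof (cases "word_weight w = of_brandt s")
      case True
      then have "F t w = 0" if "t \<in> T - {s}" for t
        using that F weighted_span_weight by fastforce
      then show ?thesis using True by (simp add: restrict_weight_def sum.remove[OF T(1) s])
    next
      case False
      then show ?thesis using F[OF s] weighted_span_weight by (auto simp: restrict_weight_def)
    qed
  qed
  ultimately have "F s \<in> II" using restrict_weight_in_cohn_ideal by metis
  then show ?thesis using F[OF s] F_carr[OF s] cls_eq_zero_iff by (simp add: CPA_zero)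
qed

lemma component_mult:
  assumes "x \<in> component s" "y \<in> component t"
  shows "x \<otimes>\<^bsub>CPA\<^esub> y \<in> component (brandt_mult G s t)"
proof -
  obtain f g where fg: "x = cls f" "f \<in> weighted_span s" "y = cls g" "g \<in> weighted_span t"
    using assms by (auto simp: cohn_component_eq)
  then have carr: "f \<in> carrier (cohn_free E)" "g \<in> carrier (cohn_free E)"
    by (auto intro: weighted_span_closed)
  have "word_weight w = of_brandt (brandt_mult G s t)" if "(f \<otimes>\<^bsub>cohn_free E\<^esub> g) w \<noteq> 0" for w
    using that unfolding cohn_free_eq
  proof (rule free_algebra_mult_nonzero)
    fix u v assume "w = u @ v" "f u \<noteq> 0" "g v \<noteq> 0"
    then show ?thesis
      using fg weighted_span_weight by (simp add: word_weight_append of_brandt_mult)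
  qed
  then show ?thesis
    using cls_in_component[OF cohn_free_mult_closed[OF carr]] fg carr by (simp add: cls_mult)
qed

theorem brandt_graded_ring_cohn_path_algebra: "brandt_graded_ring CPA G I component"
  unfolding brandt_graded_ring_def
proof (intro conjI)
  show "\<forall>x T. finite T \<and> T \<subseteq> brandt_semigroup G I \<and> (\<forall>s\<in>T. x s \<in> component s)
      \<and> finsum CPA x T = \<zero>\<^bsub>CPA\<^esub> \<longrightarrow> (\<forall>s\<in>T. x s = \<zero>\<^bsub>CPA\<^esub>)"
    using component_sum_eq_zero by blast
  show "\<forall>s\<in>brandt_semigroup G I. \<forall>t\<in>brandt_semigroup G I. brandt_mult G s t = None \<longrightarrow>
      (\<forall>x\<in>component s. \<forall>y\<in>component t. x \<otimes>\<^bsub>CPA\<^esub> y = \<zero>\<^bsub>CPA\<^esub>)"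
  proof (intro ballI impI)
    fix s t x y assume "brandt_mult G s t = None" "x \<in> component s" "y \<in> component t"
    then show "x \<otimes>\<^bsub>CPA\<^esub> y = \<zero>\<^bsub>CPA\<^esub>" using component_mult[of x s y t] by (simp add: component_None)
  qed
  show "\<forall>s\<in>brandt_semigroup G I. subgroup (component s) (add_monoid CPA)"
    using subgroup_component by blast
  show "\<forall>s\<in>brandt_semigroup G I. \<forall>t\<in>brandt_semigroup G I. brandt_mult G s t \<noteq> None \<longrightarrow>
      (\<forall>x\<in>component s. \<forall>y\<in>component t. x \<otimes>\<^bsub>CPA\<^esub> y \<in> component (brandt_mult G s t))"
    using component_mult by blast
qed (fact component_None carrier_CPA_sums)+

end

section \<open>The involution\<close>

fun gen_star :: "('v, 'e) cohn_gen \<Rightarrow> ('v, 'e) cohn_gen" where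
  "gen_star (GV v) = GV v"
| "gen_star (GE a) = GS a"
| "gen_star (GS a) = GE a"

definition word_star :: "('v, 'e) cohn_gen list \<Rightarrow> ('v, 'e) cohn_gen list" where
  "word_star w = rev (map gen_star w)"

definition free_star :: "(('v, 'e) cohn_gen list \<Rightarrow> 'r) \<Rightarrow> (('v, 'e) cohn_gen list \<Rightarrow> 'r)" where
  "free_star f = (\<lambda>w. f (word_star w))"

lemma gen_star_gen_star [simp]: "gen_star (gen_star x) = x"
  by (cases x) auto

lemma word_star_word_star [simp]: "word_star (word_star w) = w"
  by (simp add: word_star_def rev_map comp_def)

lemma word_star_eq_iff: "word_star u = w \<longleftrightarrow> u = word_star w"
  by (metis word_star_word_star)

lemma word_star_Nil [simp]: "word_star [] = []"
  by (simp add: word_star_def)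

lemma word_star_Cons: "word_star (x # w) = word_star w @ [gen_star x]"
  by (simp add: word_star_def)

lemma length_word_star [simp]: "length (word_star w) = length w"
  by (simp add: word_star_def)

lemma take_word_star: "take k (word_star w) = word_star (drop (length w - k) w)"
  by (simp add: word_star_def take_rev drop_map)

lemma drop_word_star: "drop k (word_star w) = word_star (take (length w - k) w)"
  by (simp add: word_star_def drop_rev take_map)

lemma word_star_monomial_word: "word_star (monomial_word \<mu> \<eta>) = monomial_word \<eta> \<mu>"
  by (simp add: word_star_def monomial_word_def path_word_def path_star_word_def rev_map)

lemma free_star_free_star [simp]: "free_star (free_star f) = f"
  by (simp add: free_star_def)

lemma word_elem_word_star: "word_elem u (word_star w) = word_elem (word_star u) w"
  by (auto simp: word_elem_def word_star_eq_iff)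

lemma free_star_word_diff:
  "free_star (\<lambda>w. word_elem u w - word_elem u' w) = (\<lambda>w. word_elem (word_star u) w - word_elem (word_star u') w)"
  by (simp add: free_star_def word_elem_word_star)

lemma free_star_word_elem: "free_star (word_elem u) = word_elem (word_star u)"
  by (simp add: free_star_def word_elem_word_star)

lemma free_star_scaled_word_mult:
  "free_star (scaled_word r u \<otimes>\<^bsub>free_algebra Gs\<^esub> a)
    = (\<lambda>x. r * free_star a x) \<otimes>\<^bsub>free_algebra Gs\<^esub> scaled_word 1 (word_star u)"
proof (rule ext)
  fix w
  show "free_star (scaled_word r u \<otimes>\<^bsub>free_algebra Gs\<^esub> a) w
      = ((\<lambda>x. r * free_star a x) \<otimes>\<^bsub>free_algebra Gs\<^esub> scaled_word 1 (word_star u)) w"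
    unfolding free_star_def scaled_word_mult_apply mult_scaled_word_apply
    by (auto simp: take_word_star drop_word_star word_star_eq_iff)
qed

lemma free_star_mult_scaled_word:
  "free_star (a \<otimes>\<^bsub>free_algebra Gs\<^esub> scaled_word r u)
    = scaled_word 1 (word_star u) \<otimes>\<^bsub>free_algebra Gs\<^esub> (\<lambda>x. free_star a x * r)"
proof (rule ext)
  fix w
  show "free_star (a \<otimes>\<^bsub>free_algebra Gs\<^esub> scaled_word r u) w
      = (scaled_word 1 (word_star u) \<otimes>\<^bsub>free_algebra Gs\<^esub> (\<lambda>x. free_star a x * r)) w"
    unfolding free_star_def scaled_word_mult_apply mult_scaled_word_apply
    by (auto simp: take_word_star drop_word_star word_star_eq_iff)
qed

context weighted_cohn
begin

lemma word_star_gens: "set w \<subseteq> cohn_gens E \<Longrightarrow> set (word_star w) \<subseteq> cohn_gens E"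
proof -
  have "x \<in> cohn_gens E \<Longrightarrow> gen_star x \<in> cohn_gens E" for x by (cases x) auto
  then show "set w \<subseteq> cohn_gens E \<Longrightarrow> set (word_star w) \<subseteq> cohn_gens E"
    by (auto simp: word_star_def)
qed

lemma free_star_closed: "f \<in> carrier (cohn_free E) \<Longrightarrow> free_star f \<in> carrier (cohn_free E)"
proof -
  assume f: "f \<in> carrier (cohn_free E)"
  have "{w. free_star f w \<noteq> 0} = word_star ` {w. f w \<noteq> 0}"
    by (auto simp: free_star_def image_iff intro: exI[of _ "word_star _"]) (metis word_star_word_star)
  then show ?thesis
    using f word_star_gens[of "word_star _"] by (auto simp: cohn_free_eq free_algebra_carrier_iff free_star_def)
qed

lemma free_star_relation:
  assumes "r \<in> cohn_relations E X"
  shows "free_star r \<in> cohn_relations E X"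
  using assms[unfolded cohn_relations_def]
proof (elim UnE CollectE exE conjE)
  fix v v' assume r: "r = (\<lambda>w. word_elem [GV v, GV v'] w - (if v = v' then word_elem [GV v] w else 0))"
    and "v \<in> verts E" "v' \<in> verts E"
  moreover have "free_star r = (\<lambda>w. word_elem [GV v', GV v] w - (if v' = v then word_elem [GV v'] w else 0))"
    using free_star_word_elem[of "[GV v, GV v']"] free_star_word_elem[of "[GV v]"]
    by (auto simp: r free_star_def fun_eq_iff word_star_def)
  ultimately show ?thesis unfolding cohn_relations_def by blast
next
  fix a a' assume r: "r = (\<lambda>w. word_elem [GS a, GE a'] w - (if a = a' then word_elem [GV (head E a)] w else 0))"
    and "a \<in> arcs E" "a' \<in> arcs E"
  moreover have "free_star r = (\<lambda>w. word_elem [GS a', GE a] w - (if a' = a then word_elem [GV (head E a')] w else 0))"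
    using free_star_word_elem[of "[GS a, GE a']"] free_star_word_elem[of "[GV (head E a)]"]
    by (auto simp: r free_star_def fun_eq_iff word_star_def)
  ultimately show ?thesis unfolding cohn_relations_def by blast
next
  fix v assume r: "r = (\<lambda>w. (\<Sum>a\<in>out_arcs E v. word_elem [GE a, GS a] w) - word_elem [GV v] w)"
    and "v \<in> X"
  moreover have "free_star r = r"
    by (simp add: r free_star_def word_elem_word_star) (simp add: word_star_def)
  ultimately show ?thesis unfolding cohn_relations_def by blast
next
  fix a assume r: "r = (\<lambda>w. word_elem [GV (tail E a), GE a] w - word_elem [GE a] w)" and "a \<in> arcs E"
  moreover have "free_star r = (\<lambda>w. word_elem [GS a, GV (tail E a)] w - word_elem [GS a] w)"
    by (simp add: r free_star_word_diff word_star_def)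
  ultimately show ?thesis unfolding cohn_relations_def by blast
next
  fix a assume r: "r = (\<lambda>w. word_elem [GE a, GV (head E a)] w - word_elem [GE a] w)" and "a \<in> arcs E"
  moreover have "free_star r = (\<lambda>w. word_elem [GV (head E a), GS a] w - word_elem [GS a] w)"
    by (simp add: r free_star_word_diff word_star_def)
  ultimately show ?thesis unfolding cohn_relations_def by blast
next
  fix a assume r: "r = (\<lambda>w. word_elem [GV (head E a), GS a] w - word_elem [GS a] w)" and "a \<in> arcs E"
  moreover have "free_star r = (\<lambda>w. word_elem [GE a, GV (head E a)] w - word_elem [GE a] w)"
    by (simp add: r free_star_word_diff word_star_def)
  ultimately show ?thesis unfolding cohn_relations_def by blast
next
  fix a assume r: "r = (\<lambda>w. word_elem [GS a, GV (tail E a)] w - word_elem [GS a] w)" and "a \<in> arcs E"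
  moreover have "free_star r = (\<lambda>w. word_elem [GV (tail E a), GE a] w - word_elem [GE a] w)"
    by (simp add: r free_star_word_diff word_star_def)
  ultimately show ?thesis unfolding cohn_relations_def by blast
qed

text \<open>The star is anti-multiplicative on words, but not on coefficients when R is not
  commutative; it still maps the ideal into itself.\<close>
lemma free_star_cohn_ideal: "h \<in> II \<Longrightarrow> free_star h \<in> II"
proof -
  define J where "J = {h \<in> carrier (cohn_free E). free_star h \<in> II}"
  have "II \<subseteq> J"
  proof (rule cohn_ideal_subsetI)
    show "(\<lambda>w. 0) \<in> J"
      using cohn_ideal_zero by (simp add: J_def free_star_def cohn_free_eq free_algebra_carrier_iff)
  next
    fix a b assume "a \<in> J" "b \<in> J"
    then show "(\<lambda>w. a w + b w) \<in> J"
      using cohn_ideal_add[of "free_star a" "free_star b"]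
      by (auto simp: J_def cohn_free_eq free_algebra_add_closed free_star_def)
  next
    fix a assume "a \<in> J"
    then show "(\<lambda>w. - a w) \<in> J"
      using cohn_ideal_uminus[of "free_star a"]
      by (auto simp: J_def cohn_free_eq free_algebra_uminus_closed free_star_def)
  next
    fix a r u assume a: "a \<in> J" and u: "set u \<subseteq> cohn_gens E"
    have "(\<lambda>x. r * free_star a x) \<otimes>\<^bsub>cohn_free E\<^esub> scaled_word 1 (word_star u) \<in> II"
      using a u by (auto simp: J_def intro!: cohn_ideal_mult_right cohn_ideal_scale_left
          cohn_free_scaled_word_closed word_star_gens)
    then show "scaled_word r u \<otimes>\<^bsub>cohn_free E\<^esub> a \<in> J"
      using a u cohn_free_mult_closed[OF cohn_free_scaled_word_closed[OF u]]
      by (simp add: J_def free_star_scaled_word_mult[where Gs = "cohn_gens E", folded cohn_free_eq])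
  next
    fix a r u assume a: "a \<in> J" and u: "set u \<subseteq> cohn_gens E"
    have "scaled_word 1 (word_star u) \<otimes>\<^bsub>cohn_free E\<^esub> (\<lambda>x. free_star a x * r) \<in> II"
      using a u by (auto simp: J_def intro!: cohn_ideal_mult_left cohn_ideal_scale_right
          cohn_free_scaled_word_closed word_star_gens)
    then show "a \<otimes>\<^bsub>cohn_free E\<^esub> scaled_word r u \<in> J"
      using a u cohn_free_mult_closed[OF _ cohn_free_scaled_word_closed[OF u]]
      by (simp add: J_def free_star_mult_scaled_word[where Gs = "cohn_gens E", folded cohn_free_eq])
  next
    show "cohn_relations E X \<subseteq> J"
      using cohn_relations_closed cohn_relation_in_ideal free_star_relation by (auto simp: J_def)
  qed (auto simp: J_def)
  then show "h \<in> II \<Longrightarrow> free_star h \<in> II" by (auto simp: J_def)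
qed

lemma free_star_image_cohn_ideal: "free_star ` II = II"
  using free_star_cohn_ideal by (auto simp: image_iff) (metis free_star_free_star)

lemma free_star_image_cls: "free_star ` cls f = cls (free_star f)"
proof -
  have cls_eq: "cls g = (\<lambda>h w. h w + g w) ` II" for g
    by (auto simp: cohn_class_def a_r_coset_def' cohn_free_eq free_algebra_add)
  have "free_star ` cls f = (\<lambda>h w. h w + free_star f w) ` (free_star ` II)"
    unfolding cls_eq by (simp add: image_image free_star_def)
  then show ?thesis by (simp add: free_star_image_cohn_ideal cls_eq)
qed

lemma gen_weight_gen_star: "x \<in> cohn_gens E \<Longrightarrow> gen_weight (gen_star x) = bm_inv G (gen_weight x)"
proof (cases x)
  case (GV v)
  moreover assume "x \<in> cohn_gens E"
  ultimately show ?thesis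
    using vertex_weight[of v] monoid.inv_one[OF monoid] by (auto simp: gen_weight_simps)
next
  case (GS a)
  moreover assume "x \<in> cohn_gens E"
  ultimately show ?thesis
    using bm_inv_inv[OF group bm_in_gen_weight[of "GE a"]] by (simp add: gen_weight_simps)
qed (simp add: gen_weight_simps)

lemma word_weight_word_star:
  "set w \<subseteq> cohn_gens E \<Longrightarrow> word_weight (word_star w) = bm_inv G (word_weight w)"
proof (induction w)
  case (Cons x w)
  then show ?case
    by (simp add: word_star_Cons word_weight_append word_weight_single word_weight_Cons
        gen_weight_gen_star bm_inv_mult[OF group bm_in_gen_weight bm_in_word_weight])
qed simp

lemma word_star_weighted_monomial:
  assumes "m \<in> weighted_monomials E G wv we s"
  shows "word_star m \<in> weighted_monomials E G wv we (brandt_inv G s)"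
proof -
  obtain \<mu> \<eta> where m: "m = monomial_word \<mu> \<eta>" "monomial_pair E \<mu> \<eta>" "word_weight m = of_brandt s"
    using assms by (auto simp: weighted_monomials_weight)
  have "monomial_pair E \<eta> \<mu>" using m(2) by (auto simp: monomial_pair_def)
  moreover have "word_weight (monomial_word \<eta> \<mu>) = of_brandt (brandt_inv G s)"
    using m word_weight_word_star[OF monomial_word_gens[OF m(2)]]
    by (simp add: word_star_monomial_word of_brandt_inv)
  ultimately show ?thesis
    unfolding weighted_monomials_weight m(1) word_star_monomial_word by blast
qed

lemma free_star_weighted_span:
  "f \<in> weighted_span s \<Longrightarrow> free_star f \<in> weighted_span (brandt_inv G s)"
  using free_star_closed word_star_weighted_monomial by (fastforce simp: weighted_span_def free_star_def)

lemma free_star_image_weighted_span: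
  assumes "s \<in> brandt_semigroup G I"
  shows "free_star ` weighted_span s = weighted_span (brandt_inv G s)"
proof
  show "free_star ` weighted_span s \<subseteq> weighted_span (brandt_inv G s)"
    using free_star_weighted_span by blast
  show "weighted_span (brandt_inv G s) \<subseteq> free_star ` weighted_span s"
    using free_star_weighted_span[of _ "brandt_inv G s"] brandt_inv_inv[OF group assms]
    by (auto simp: image_iff) (metis free_star_free_star)
qed

theorem anti_graded_involution_cohn_path_algebra:
  "anti_graded_involution CPA G I component (\<lambda>Y. free_star ` Y)"
  unfolding anti_graded_involution_def
proof (intro conjI ballI funcsetI)
  fix Y assume "Y \<in> carrier CPA"
  then obtain f where f: "Y = cls f" "f \<in> carrier (cohn_free E)" "f [] = 0" by (auto simp: carrier_CPA)
  then have "free_star f \<in> carrier (cohn_free E)" "free_star f [] = 0"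
    using free_star_closed by (auto simp: free_star_def)
  then show "free_star ` Y \<in> carrier CPA"
    unfolding f(1) free_star_image_cls by (auto simp: carrier_CPA)
next
  fix s assume s: "s \<in> brandt_semigroup G I"
  have "(\<lambda>Y. free_star ` Y) ` component s = (\<lambda>f. cls (free_star f)) ` weighted_span s"
    by (simp add: cohn_component_eq image_image free_star_image_cls)
  also have "\<dots> = cls ` free_star ` weighted_span s"
    by (simp add: image_image)
  also have "\<dots> = component (brandt_inv G s)"
    by (simp add: free_star_image_weighted_span[OF s] cohn_component_eq)
  finally show "(\<lambda>Y. free_star ` Y) ` component s = component (brandt_inv G s)" .
qed (simp add: image_image)

end

theorem proposition3p5:
  fixes E :: "('v, 'e) pre_digraph"
    and X :: "'v set"
    and G :: "('a, 'b) monoid_scheme"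
    and I :: "'i set"
    and wv :: "'v \<Rightarrow> 'i \<times> 'a \<times> 'i"
    and we :: "'e \<Rightarrow> 'i \<times> 'a \<times> 'i"
  assumes "wf_digraph E"
    and "X \<subseteq> regular_vertices E"
    and "group G"
    and "weight_mapping E G I wv we"
  shows "brandt_graded_ring (cohn_path_algebra E X :: (('v, 'e) cohn_gen list \<Rightarrow> 'r::ring_1) set ring) G I (cohn_component E X G wv we)
         \<and> (\<exists>star. anti_graded_involution (cohn_path_algebra E X :: (('v, 'e) cohn_gen list \<Rightarrow> 'r::ring_1) set ring) G I
                      (cohn_component E X G wv we) star)
         \<and> brandt_graded_ring (leavitt_path_algebra E :: (('v, 'e) cohn_gen list \<Rightarrow> 'r::ring_1) set ring) G I
             (cohn_component E (regular_vertices E) G wv we)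
         \<and> (\<exists>star. anti_graded_involution (leavitt_path_algebra E :: (('v, 'e) cohn_gen list \<Rightarrow> 'r::ring_1) set ring) G I
                      (cohn_component E (regular_vertices E) G wv we) star)"
proof -
  have regular: "regular_vertices E \<subseteq> verts E"
    by (auto simp: regular_vertices_def)
  interpret C: weighted_cohn E X G I wv we "TYPE('r)"
    using assms regular by (auto simp: weighted_cohn_def)
  interpret L: weighted_cohn E "regular_vertices E" G I wv we "TYPE('r)"
    using assms regular by (auto simp: weighted_cohn_def)
  show ?thesis
    using C.brandt_graded_ring_cohn_path_algebra C.anti_graded_involution_cohn_path_algebra
      L.brandt_graded_ring_cohn_path_algebra L.anti_graded_involution_cohn_path_algebra
    unfolding leavitt_path_algebra_def by blast
qed

end
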